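(* Let $\Omega\subset\mathbb{R}^n$ be a bounded domain, $(d_1,d_2,f,\kappa)\in(0,\infty)^4$, and for $\ell\in\{1,2\}$ let $\gamma_\ell:\Omega\times\Omega\to[0,\infty)$ be measurable with $\int_\Omega\gamma_\ell(y,x)\,\mathrm{d}y=\int_\Omega\gamma_\ell(x,y)\,\mathrm{d}y\le\gamma_\infty<\infty$ for $x\in\Omega$, some $\gamma_\infty\ge1$. Then the semi-trivial steady state $(1,0)$ of $$\partial_t u=d_1\Gamma_{\gamma_1}u-uv^2+f(1-u),\qquad \partial_t v=d_2\Gamma_{\gamma_2}v+uv^2-(f+\kappa)v\quad\text{in }(0,\infty)\times\Omega$$ is locally asymptotically stable in $X^2$.
   Context: $X:=L_\infty(\Omega)$, $\Gamma_\gamma z(x):=\int_\Omega\gamma(x,y)(z(y)-z(x))\,\mathrm{d}y$. The system generates a (local) semiflow on $X^2$. *)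

theory Defs
  imports "HOL-Analysis.Analysis" "HOL-Probability.Essential_Supremum"
begin

definition linf :: "'a::euclidean_space set \<Rightarrow> ('a \<Rightarrow> real) \<Rightarrow> ereal" where
  "linf \<Omega> z = esssup (lebesgue_on \<Omega>) (\<lambda>x. ereal \<bar>z x\<bar>)"

text \<open>Membership in X = L-infinity(\<Omega>) (representatives).\<close>
definition inX :: "'a::euclidean_space set \<Rightarrow> ('a \<Rightarrow> real) \<Rightarrow> bool" where
  "inX \<Omega> z \<longleftrightarrow> z \<in> borel_measurable (lebesgue_on \<Omega>) \<and> linf \<Omega> z < \<infinity>"

definition Gam :: "'a::euclidean_space set \<Rightarrow> ('a \<Rightarrow> 'a \<Rightarrow> real) \<Rightarrow> ('a \<Rightarrow> real) \<Rightarrow> 'a \<Rightarrow> real" where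
  "Gam \<Omega> \<gamma> z x = (LINT y|lebesgue_on \<Omega>. \<gamma> x y * (z y - z x))"

definition dist10 :: "'a::euclidean_space set \<Rightarrow> ('a \<Rightarrow> real) \<Rightarrow> ('a \<Rightarrow> real) \<Rightarrow> ereal" where
  "dist10 \<Omega> u v = linf \<Omega> (\<lambda>x. u x - 1) + linf \<Omega> v"

definition is_sol ::
  "'a::euclidean_space set \<Rightarrow> real \<Rightarrow> real \<Rightarrow> real \<Rightarrow> real \<Rightarrow>
   ('a \<Rightarrow> 'a \<Rightarrow> real) \<Rightarrow> ('a \<Rightarrow> 'a \<Rightarrow> real) \<Rightarrow> real set \<Rightarrow>
   (real \<Rightarrow> 'a \<Rightarrow> real) \<Rightarrow> (real \<Rightarrow> 'a \<Rightarrow> real) \<Rightarrow> bool" where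
  "is_sol \<Omega> d1 d2 f \<kappa> \<gamma>1 \<gamma>2 J U V \<longleftrightarrow>
     0 \<in> J \<and>
     (\<forall>t\<in>J. inX \<Omega> (U t) \<and> inX \<Omega> (V t)) \<and>
     (\<forall>t\<in>J. ((\<lambda>s. linf \<Omega> (\<lambda>x. (U s x - U t x) / (s - t)
                 - (d1 * Gam \<Omega> \<gamma>1 (U t) x - U t x * (V t x)\<^sup>2 + f * (1 - U t x))))
              \<longlongrightarrow> 0) (at t within J)) \<and>
     (\<forall>t\<in>J. ((\<lambda>s. linf \<Omega> (\<lambda>x. (V s x - V t x) / (s - t)
                 - (d2 * Gam \<Omega> \<gamma>2 (V t) x + U t x * (V t x)\<^sup>2 - (f + \<kappa>) * V t x)))
              \<longlongrightarrow> 0) (at t within J))"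

definition time_intervals :: "real set set" where
  "time_intervals = insert {0..} {{0..<T} | T. T > 0}"

end

theory Submission
  imports Defs "HOL-Probability.Discrete_Topology"
begin

text \<open>
  Write \<open>w = u - 1\<close>. Since \<open>\<Gamma>\<close> has a nonnegative kernel of row mass at most \<open>\<gamma>inf\<close>, an explicit
  Euler step of \<open>w' = d \<Gamma> w - c w\<close> with a small time step \<open>h\<close> is a nonnegative combination of
  values of \<open>w\<close> with total weight \<open>1 - h c\<close>, so it shrinks the L-infinity norm by that factor.
  Along any solution the deviation \<open>\<phi> = \<parallel>w\<parallel>\<^sub>\<infinity> + \<parallel>v\<parallel>\<^sub>\<infinity>\<close> from \<open>(1, 0)\<close> therefore satisfies the
  one-sided derivative bound \<open>D\<^sup>+\<phi> \<le> - f \<phi> + 2 (1 + \<parallel>w\<parallel>\<^sub>\<infinity>) \<parallel>v\<parallel>\<^sub>\<infinity>\<^sup>2 \<le> - f \<phi> / 2\<close> as long as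
  \<open>\<phi> < min 1 (f / 8)\<close>, and a comparison argument gives \<open>\<phi> t \<le> \<phi> 0 * exp (- f t / 4)\<close>.

  Global solutions for small data come from Picard iteration for the system with the reaction term
  cut off outside \<open>[-1, 1]\<^sup>2\<close>, an ODE in the Banach space of bounded functions; the same decay
  estimate shows that the cut-off is never active.
\<close>

section \<open>Essentially bounded functions\<close>

definition linf_norm :: "'a::euclidean_space set \<Rightarrow> ('a \<Rightarrow> real) \<Rightarrow> real" where
  "linf_norm \<Omega> z = real_of_ereal (linf \<Omega> z)"

lemma AE_abs_le_linf: "AE x in lebesgue_on \<Omega>. ereal \<bar>z x\<bar> \<le> linf \<Omega> z"
  unfolding linf_def by (rule esssup_AE)

lemma AE_abs_less_of_linf_less:
  assumes "linf \<Omega> z < ereal e"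
  shows "AE x in lebesgue_on \<Omega>. \<bar>z x\<bar> < e"
  using AE_abs_le_linf[where \<Omega>=\<Omega> and z=z]
proof eventually_elim
  case (elim x)
  then have "ereal \<bar>z x\<bar> < ereal e" using assms by (rule le_less_trans)
  then show ?case by simp
qed

lemma linf_le:
  assumes "z \<in> borel_measurable (lebesgue_on \<Omega>)" "AE x in lebesgue_on \<Omega>. \<bar>z x\<bar> \<le> c"
  shows "linf \<Omega> z \<le> ereal c"
  unfolding linf_def using assms by (intro esssup_I) auto

lemma inX_I:
  assumes "z \<in> borel_measurable (lebesgue_on \<Omega>)" "AE x in lebesgue_on \<Omega>. \<bar>z x\<bar> \<le> c"
  shows "inX \<Omega> z"
proof -
  have "linf \<Omega> z < \<infinity>" using linf_le[OF assms] by (rule le_less_trans) simp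
  then show ?thesis using assms(1) unfolding inX_def by simp
qed

lemma borel_measurable_lebesgue_on_AE_cong:
  fixes f g :: "'a::euclidean_space \<Rightarrow> real"
  assumes \<Omega>: "\<Omega> \<in> sets lebesgue" and f: "f \<in> borel_measurable (lebesgue_on \<Omega>)"
    and fg: "AE x in lebesgue_on \<Omega>. f x = g x"
  shows "g \<in> borel_measurable (lebesgue_on \<Omega>)"
proof -
  have "(\<lambda>x. indicator \<Omega> x *\<^sub>R f x) \<in> borel_measurable lebesgue"
    using f \<Omega> borel_measurable_restrict_space_iff[of \<Omega> lebesgue f] by simp
  moreover have "AE x in lebesgue. indicator \<Omega> x *\<^sub>R f x = indicator \<Omega> x *\<^sub>R g x"
    using fg \<Omega> by (auto simp: AE_restrict_space_iff indicator_def elim: eventually_mono)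
  ultimately have "(\<lambda>x. indicator \<Omega> x *\<^sub>R g x) \<in> borel_measurable lebesgue"
    by (rule borel_measurable_AE)
  then show ?thesis using \<Omega> borel_measurable_restrict_space_iff[of \<Omega> lebesgue g] by simp
qed

lemma continuous_within_of_Lipschitz_at:
  fixes g :: "real \<Rightarrow> real"
  assumes "eventually (\<lambda>s. \<bar>g s - g t\<bar> \<le> \<bar>s - t\<bar> * K) (at t within S)"
  shows "continuous (at t within S) g"
proof -
  have "((\<lambda>s. \<bar>s - t\<bar> * K) \<longlongrightarrow> \<bar>t - t\<bar> * K) (at t within S)"
    by (intro tendsto_intros)
  then have "((\<lambda>s. g t - \<bar>s - t\<bar> * K) \<longlongrightarrow> g t) (at t within S)"
    "((\<lambda>s. g t + \<bar>s - t\<bar> * K) \<longlongrightarrow> g t) (at t within S)"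
    by (auto intro!: tendsto_eq_intros)
  then have "(g \<longlongrightarrow> g t) (at t within S)"
    by (rule tendsto_sandwich[rotated 2]) (use assms in \<open>auto elim: eventually_mono\<close>)
  then show ?thesis unfolding continuous_within .
qed

lemma abs_nonneg_combination_le:
  fixes a b x y :: real
  assumes "0 \<le> a" "0 \<le> b"
  shows "\<bar>a * x + b * y\<bar> \<le> a * \<bar>x\<bar> + b * \<bar>y\<bar>"
  using abs_triangle_ineq[of "a * x" "b * y"] assms by (simp add: abs_mult)

lemma abs_scaled_sum_le:
  fixes a b x y z :: real
  assumes "0 \<le> a" "0 \<le> b"
  shows "\<bar>a * x - b * y + z\<bar> \<le> a * \<bar>x\<bar> + b * \<bar>y\<bar> + \<bar>z\<bar>"
    and "\<bar>a * x - b * y - z\<bar> \<le> a * \<bar>x\<bar> + b * \<bar>y\<bar> + \<bar>z\<bar>"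
proof -
  have "\<bar>a * x\<bar> = a * \<bar>x\<bar>" "\<bar>b * y\<bar> = b * \<bar>y\<bar>" using assms by (simp_all add: abs_mult)
  then show "\<bar>a * x - b * y + z\<bar> \<le> a * \<bar>x\<bar> + b * \<bar>y\<bar> + \<bar>z\<bar>"
    "\<bar>a * x - b * y - z\<bar> \<le> a * \<bar>x\<bar> + b * \<bar>y\<bar> + \<bar>z\<bar>" by linarith+
qed

locale open_domain =
  fixes \<Omega> :: "'a::euclidean_space set"
  assumes open_domain: "open \<Omega>" and nonempty_domain: "\<Omega> \<noteq> {}"
begin

lemma domain_sets_lebesgue: "\<Omega> \<in> sets lebesgue"
  using open_domain by simp

lemma space_lebesgue_on_domain [simp]: "space (lebesgue_on \<Omega>) = \<Omega>"
  by (simp add: domain_sets_lebesgue)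

lemma AE_in_domain: "AE x in lebesgue_on \<Omega>. x \<in> \<Omega>"
  by (metis AE_space space_lebesgue_on_domain)

lemma AE_lebesgue_on_of_lborel: "AE x in lborel. P x \<Longrightarrow> AE x in lebesgue_on \<Omega>. P x"
  using domain_sets_lebesgue by (auto simp: AE_restrict_space_iff dest: AE_completion elim: eventually_mono)

lemma emeasure_domain_nonzero: "emeasure (lebesgue_on \<Omega>) (space (lebesgue_on \<Omega>)) \<noteq> 0"
proof -
  have "emeasure lebesgue \<Omega> > 0"
    using open_domain nonempty_domain
    by (metis borel_open gr_zeroI negligible_iff_null_sets null_setsI
      open_not_negligible sets_completionI_sets sets_lborel)
  then show ?thesis by (simp add: emeasure_restrict_space domain_sets_lebesgue)
qed

lemma linf_nonneg: "0 \<le> linf \<Omega> z"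
proof -
  have "esssup (lebesgue_on \<Omega>) (\<lambda>x. 0) \<le> esssup (lebesgue_on \<Omega>) (\<lambda>x. ereal \<bar>z x\<bar>)"
    by (rule esssup_mono) auto
  then show ?thesis using esssup_const[OF emeasure_domain_nonzero, where c="0::ereal"] unfolding linf_def by simp
qed

lemma inX_linf_norm:
  assumes "inX \<Omega> z"
  shows "linf \<Omega> z = ereal (linf_norm \<Omega> z)" "0 \<le> linf_norm \<Omega> z"
    "AE x in lebesgue_on \<Omega>. \<bar>z x\<bar> \<le> linf_norm \<Omega> z"
proof -
  have "linf \<Omega> z < \<infinity>" using assms unfolding inX_def by simp
  then show eq: "linf \<Omega> z = ereal (linf_norm \<Omega> z)"
    unfolding linf_norm_def using linf_nonneg[of z] by (cases "linf \<Omega> z") auto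
  show "0 \<le> linf_norm \<Omega> z" unfolding linf_norm_def using linf_nonneg by (simp add: real_of_ereal_pos)
  show "AE x in lebesgue_on \<Omega>. \<bar>z x\<bar> \<le> linf_norm \<Omega> z"
    using AE_abs_le_linf[where \<Omega>=\<Omega> and z=z] unfolding eq by simp
qed

lemma linf_norm_le:
  assumes "inX \<Omega> z" "AE x in lebesgue_on \<Omega>. \<bar>z x\<bar> \<le> c"
  shows "linf_norm \<Omega> z \<le> c"
  using linf_le[of z \<Omega> c] assms inX_linf_norm(1)[OF assms(1)] unfolding inX_def by simp

lemma inX_diff_const: "inX \<Omega> z \<Longrightarrow> inX \<Omega> (\<lambda>x. z x - c)"
  by (rule inX_I[where c="linf_norm \<Omega> z + \<bar>c\<bar>"])
    (use inX_linf_norm(3)[of z] in \<open>auto simp: inX_def elim: eventually_mono\<close>)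

lemma linf_tendsto_zero:
  fixes E :: "'b \<Rightarrow> 'c::real_normed_vector"
  assumes "((\<lambda>s. norm (E s)) \<longlongrightarrow> 0) F" "\<And>s. linf \<Omega> (h s) \<le> ereal (norm (E s))"
  shows "((\<lambda>s. linf \<Omega> (h s)) \<longlongrightarrow> 0) F"
proof (rule tendsto_sandwich[where f="\<lambda>_. 0" and h="\<lambda>s. ereal (norm (E s))"])
  show "((\<lambda>s. ereal (norm (E s))) \<longlongrightarrow> 0) F"
    using tendsto_ereal[OF assms(1)] by (simp add: zero_ereal_def)
qed (use linf_nonneg assms(2) in auto)

lemma linf_norm_continuous_within:
  assumes w: "\<And>s. s \<in> J \<Longrightarrow> inX \<Omega> (w s)" and t: "t \<in> J"
    and deriv: "((\<lambda>s. linf \<Omega> (\<lambda>x. (w s x - w t x) / (s - t) - r x)) \<longlongrightarrow> 0) (at t within J)"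
    and r: "AE x in lebesgue_on \<Omega>. \<bar>r x\<bar> \<le> K"
  shows "continuous (at t within J) (\<lambda>s. linf_norm \<Omega> (w s))"
proof (rule continuous_within_of_Lipschitz_at)
  have "eventually (\<lambda>s. linf \<Omega> (\<lambda>x. (w s x - w t x) / (s - t) - r x) < ereal 1) (at t within J)"
    using deriv by (rule order_tendstoD) simp
  moreover have "eventually (\<lambda>s. s \<in> J \<and> s \<noteq> t) (at t within J)"
    by (simp add: eventually_at_filter)
  ultimately show "eventually (\<lambda>s. \<bar>linf_norm \<Omega> (w s) - linf_norm \<Omega> (w t)\<bar> \<le> \<bar>s - t\<bar> * (K + 1))
      (at t within J)"
  proof eventually_elim
    case (elim s)
    then have s: "s \<in> J" by simp
    have close: "AE x in lebesgue_on \<Omega>. \<bar>w s x - w t x\<bar> \<le> \<bar>s - t\<bar> * (K + 1)"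
      using AE_abs_less_of_linf_less[OF elim(1)] r
    proof eventually_elim
      case (elim x)
      have "\<bar>(w s x - w t x) / (s - t)\<bar> \<le> K + 1" using elim by linarith
      moreover have "0 < \<bar>s - t\<bar>" using \<open>s \<in> J \<and> s \<noteq> t\<close> by simp
      ultimately show ?case by (simp add: pos_divide_le_eq mult.commute)
    qed
    have "linf_norm \<Omega> (w s) \<le> linf_norm \<Omega> (w t) + \<bar>s - t\<bar> * (K + 1)"
      using close inX_linf_norm(3)[OF w[OF t]]
      by (intro linf_norm_le w s) (auto elim!: eventually_elim2)
    moreover have "linf_norm \<Omega> (w t) \<le> linf_norm \<Omega> (w s) + \<bar>s - t\<bar> * (K + 1)"
      using close inX_linf_norm(3)[OF w[OF s]]
      by (intro linf_norm_le w t) (auto elim!: eventually_elim2)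
    ultimately show ?case by linarith
  qed
qed

end

section \<open>Nonlocal diffusion operators\<close>

lemma Gam_shift: "Gam \<Omega> \<gamma> (\<lambda>x. z x + c) = Gam \<Omega> \<gamma> z" "Gam \<Omega> \<gamma> (\<lambda>x. z x - c) = Gam \<Omega> \<gamma> z"
  by (simp_all add: Gam_def fun_eq_iff)

lemma Gam_cong_AE:
  assumes "(\<lambda>y. \<gamma> x y) \<in> borel_measurable (lebesgue_on \<Omega>)"
    and "z1 \<in> borel_measurable (lebesgue_on \<Omega>)" "z2 \<in> borel_measurable (lebesgue_on \<Omega>)"
    and "AE y in lebesgue_on \<Omega>. z1 y = z2 y" "z1 x = z2 x"
  shows "Gam \<Omega> \<gamma> z1 x = Gam \<Omega> \<gamma> z2 x"
  unfolding Gam_def using assms by (intro integral_cong_AE) (auto elim: eventually_mono)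

locale nonlocal_kernel = open_domain \<Omega> for \<Omega> :: "'a::euclidean_space set" +
  fixes \<gamma> :: "'a \<Rightarrow> 'a \<Rightarrow> real" and gi :: real
  assumes kernel_measurable: "(\<lambda>p. \<gamma> (fst p) (snd p)) \<in> borel_measurable (lebesgue_on (\<Omega> \<times> \<Omega>))"
    and kernel_nonneg: "\<And>x y. x \<in> \<Omega> \<Longrightarrow> y \<in> \<Omega> \<Longrightarrow> 0 \<le> \<gamma> x y"
    and kernel_mass_le: "\<And>x. x \<in> \<Omega> \<Longrightarrow> (\<integral>\<^sup>+ y. ennreal (\<gamma> x y) \<partial>lebesgue_on \<Omega>) \<le> ennreal gi"
    and mass_bound_nonneg: "0 \<le> gi"
begin

definition regular_points :: "'a set" where
  "regular_points = {x \<in> \<Omega>. (\<lambda>y. \<gamma> x y) \<in> borel_measurable (lebesgue_on \<Omega>)}"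

text \<open>Measurability of \<open>\<Gamma> z\<close> is obtained by passing to Borel versions of \<open>\<gamma>\<close> and \<open>z\<close>, for which
  the parametric integral is Borel by Fubini's theorem.\<close>
lemma kernel_borel_version:
  obtains g :: "'a \<times> 'a \<Rightarrow> real" where "g \<in> borel_measurable (lborel \<Otimes>\<^sub>M lborel)"
    "AE x in lebesgue_on \<Omega>. x \<in> \<Omega> \<and> (AE y in lborel. indicator \<Omega> y * \<gamma> x y = g (x, y))"
proof -
  define H where "H p = indicator (\<Omega> \<times> \<Omega>) p * \<gamma> (fst p) (snd p)" for p :: "'a \<times> 'a"
  have "\<Omega> \<times> \<Omega> \<in> sets lebesgue" using open_domain by (simp add: open_Times)
  then have "H \<in> borel_measurable lebesgue"
    using kernel_measurable borel_measurable_restrict_space_iff[of "\<Omega> \<times> \<Omega>" lebesgue "\<lambda>p. \<gamma> (fst p) (snd p)"]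
    unfolding H_def by simp
  then obtain g where g: "g \<in> borel_measurable lborel" "AE p in lborel. H p = g p"
    using completion_ex_borel_measurable_real by blast
  have "AE x in lborel. AE y in lborel. H (x, y) = g (x, y)"
    by (rule lborel_pair.AE_pair) (subst lborel_prod, rule g(2))
  then have "AE x in lebesgue_on \<Omega>. AE y in lborel. H (x, y) = g (x, y)"
    by (rule AE_lebesgue_on_of_lborel)
  then have "AE x in lebesgue_on \<Omega>. x \<in> \<Omega> \<and> (AE y in lborel. indicator \<Omega> y * \<gamma> x y = g (x, y))"
    using AE_in_domain
  proof eventually_elim
    case (elim x)
    then have "H (x, y) = indicator \<Omega> y * \<gamma> x y" for y by (simp add: H_def indicator_def)
    then show ?case using elim by simp
  qed
  with g(1) show thesis by (intro that) (auto simp: lborel_prod)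
qed

lemma row_measurable_of_borel_version:
  assumes g: "g \<in> borel_measurable (lborel \<Otimes>\<^sub>M lborel)" and x: "x \<in> \<Omega>"
    and gx: "AE y in lborel. indicator \<Omega> y * \<gamma> x y = g (x, y)"
  shows "(\<lambda>y. \<gamma> x y) \<in> borel_measurable (lebesgue_on \<Omega>)"
proof -
  have "(\<lambda>y. g (x, y)) \<in> borel_measurable lborel"
    using g by measurable
  then have "(\<lambda>y. g (x, y)) \<in> borel_measurable lebesgue"
    by (rule measurable_completion)
  moreover have "AE y in lebesgue. g (x, y) = indicator \<Omega> y * \<gamma> x y"
    using AE_completion[OF gx] by (auto elim: eventually_mono)
  ultimately have "(\<lambda>y. indicator \<Omega> y * \<gamma> x y) \<in> borel_measurable lebesgue"
    by (rule borel_measurable_AE)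
  then show ?thesis
    using borel_measurable_restrict_space_iff[of \<Omega> lebesgue "\<lambda>y. \<gamma> x y"] domain_sets_lebesgue by simp
qed

lemma AE_regular_point: "AE x in lebesgue_on \<Omega>. x \<in> regular_points"
proof -
  obtain g where "g \<in> borel_measurable (lborel \<Otimes>\<^sub>M lborel)"
    "AE x in lebesgue_on \<Omega>. x \<in> \<Omega> \<and> (AE y in lborel. indicator \<Omega> y * \<gamma> x y = g (x, y))"
    by (rule kernel_borel_version)
  then show ?thesis
    unfolding regular_points_def by (auto elim: eventually_mono intro: row_measurable_of_borel_version)
qed

lemma Gam_eq_lborel_integral:
  assumes g: "g \<in> borel_measurable (lborel \<Otimes>\<^sub>M lborel)" and x: "x \<in> \<Omega>"
    and gx: "AE y in lborel. indicator \<Omega> y * \<gamma> x y = g (x, y)"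
    and z: "z \<in> borel_measurable (lebesgue_on \<Omega>)" and zB: "zB \<in> borel_measurable lborel"
    and zz: "AE y in lborel. indicator \<Omega> y * z y = zB y"
  shows "Gam \<Omega> \<gamma> z x = (LINT y|lborel. g (x, y) * (zB y - z x))"
proof -
  have "(\<lambda>y. \<gamma> x y * (z y - z x)) \<in> borel_measurable (lebesgue_on \<Omega>)"
    using row_measurable_of_borel_version[OF g x gx] z by measurable
  then have m1: "(\<lambda>y. indicator \<Omega> y * (\<gamma> x y * (z y - z x))) \<in> borel_measurable lebesgue"
    using borel_measurable_restrict_space_iff[of \<Omega> lebesgue "\<lambda>y. \<gamma> x y * (z y - z x)"]
      domain_sets_lebesgue by simp
  have m2: "(\<lambda>y. g (x, y) * (zB y - z x)) \<in> borel_measurable lborel"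
    using g zB by measurable
  have "AE y in lborel. indicator \<Omega> y * (\<gamma> x y * (z y - z x)) = g (x, y) * (zB y - z x)"
    using gx zz by eventually_elim (auto simp: indicator_def split: if_splits)
  then have ae: "AE y in lebesgue. indicator \<Omega> y * (\<gamma> x y * (z y - z x)) = g (x, y) * (zB y - z x)"
    by (rule AE_completion)
  have "Gam \<Omega> \<gamma> z x = (LINT y|lebesgue. indicator \<Omega> y * (\<gamma> x y * (z y - z x)))"
    unfolding Gam_def using domain_sets_lebesgue by (simp add: integral_restrict_space)
  also have "\<dots> = (LINT y|lebesgue. g (x, y) * (zB y - z x))"
    by (rule integral_cong_AE[OF m1 measurable_completion[OF m2] ae])
  also have "\<dots> = (LINT y|lborel. g (x, y) * (zB y - z x))"
    by (rule integral_completion[OF m2])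
  finally show ?thesis .
qed

lemma Gam_measurable:
  assumes z: "z \<in> borel_measurable (lebesgue_on \<Omega>)"
  shows "Gam \<Omega> \<gamma> z \<in> borel_measurable (lebesgue_on \<Omega>)"
proof -
  obtain g where g: "g \<in> borel_measurable (lborel \<Otimes>\<^sub>M lborel)"
    and gx: "AE x in lebesgue_on \<Omega>. x \<in> \<Omega> \<and> (AE y in lborel. indicator \<Omega> y * \<gamma> x y = g (x, y))"
    by (rule kernel_borel_version)
  have "(\<lambda>y. indicator \<Omega> y * z y) \<in> borel_measurable lebesgue"
    using z borel_measurable_restrict_space_iff[of \<Omega> lebesgue z] domain_sets_lebesgue by simp
  then obtain zB where zB: "zB \<in> borel_measurable lborel"
    and zz: "AE y in lborel. indicator \<Omega> y * z y = zB y"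
    using completion_ex_borel_measurable_real by blast
  define \<Phi> where "\<Phi> q = (LINT y|lborel. g (fst q, y) * (zB y - snd q))" for q :: "'a \<times> real"
  have [measurable]: "g \<in> borel_measurable (borel \<Otimes>\<^sub>M borel)" "zB \<in> borel_measurable borel"
    using g zB by (simp_all add: lborel_prod borel_prod)
  have "(\<lambda>(q, y). g (fst q, y) * (zB y - snd q))
      \<in> borel_measurable (((borel :: 'a measure) \<Otimes>\<^sub>M (borel :: real measure)) \<Otimes>\<^sub>M lborel)"
    by (subst measurable_cong_sets[OF sets_pair_measure_cong[OF refl sets_lborel] refl]) measurable
  then have [measurable]: "\<Phi> \<in> borel_measurable ((borel :: 'a measure) \<Otimes>\<^sub>M (borel :: real measure))"
    unfolding \<Phi>_def by (rule lborel.borel_measurable_lebesgue_integral)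
  have [measurable]: "(\<lambda>x. x) \<in> lebesgue_on \<Omega> \<rightarrow>\<^sub>M (borel :: 'a measure)"
    by (intro measurable_restrict_space1 measurable_completion) (simp add: measurable_ident_sets)
  have "(\<lambda>x. \<Phi> (x, z x)) \<in> borel_measurable (lebesgue_on \<Omega>)"
    using z by measurable
  moreover have "AE x in lebesgue_on \<Omega>. \<Phi> (x, z x) = Gam \<Omega> \<gamma> z x"
    using gx by eventually_elim (simp add: \<Phi>_def Gam_eq_lborel_integral[OF g _ _ z zB zz])
  ultimately show ?thesis
    by (rule borel_measurable_lebesgue_on_AE_cong[OF domain_sets_lebesgue])
qed

end

context nonlocal_kernel
begin

lemma AE_row_nonneg: "x \<in> \<Omega> \<Longrightarrow> AE y in lebesgue_on \<Omega>. 0 \<le> \<gamma> x y"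
  using AE_in_domain by eventually_elim (rule kernel_nonneg)

lemma row_integrable:
  assumes "x \<in> regular_points"
  shows "integrable (lebesgue_on \<Omega>) (\<lambda>y. \<gamma> x y)"
    and "0 \<le> (LINT y|lebesgue_on \<Omega>. \<gamma> x y)" "(LINT y|lebesgue_on \<Omega>. \<gamma> x y) \<le> gi"
proof -
  have x: "x \<in> \<Omega>" and m: "(\<lambda>y. \<gamma> x y) \<in> borel_measurable (lebesgue_on \<Omega>)"
    using assms unfolding regular_points_def by auto
  note nn = AE_row_nonneg[OF x]
  have "(\<integral>\<^sup>+ y. ennreal (norm (\<gamma> x y)) \<partial>lebesgue_on \<Omega>) = (\<integral>\<^sup>+ y. ennreal (\<gamma> x y) \<partial>lebesgue_on \<Omega>)"
    using nn by (intro nn_integral_cong_AE) (auto elim: eventually_mono)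
  also have "\<dots> < \<infinity>" using kernel_mass_le[OF x] by (simp add: le_less_trans)
  finally show int: "integrable (lebesgue_on \<Omega>) (\<lambda>y. \<gamma> x y)" by (rule integrableI_bounded[OF m])
  show pos: "0 \<le> (LINT y|lebesgue_on \<Omega>. \<gamma> x y)" by (rule integral_nonneg_AE[OF nn])
  have "ennreal (LINT y|lebesgue_on \<Omega>. \<gamma> x y) = (\<integral>\<^sup>+ y. ennreal (\<gamma> x y) \<partial>lebesgue_on \<Omega>)"
    by (rule nn_integral_eq_integral[OF int nn, symmetric])
  then have "ennreal (LINT y|lebesgue_on \<Omega>. \<gamma> x y) \<le> ennreal gi"
    using kernel_mass_le[OF x] by simp
  then show "(LINT y|lebesgue_on \<Omega>. \<gamma> x y) \<le> gi"
    using mass_bound_nonneg by simp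
qed

lemma row_product_integrable:
  assumes x: "x \<in> regular_points" and z: "z \<in> borel_measurable (lebesgue_on \<Omega>)"
    and zM: "AE y in lebesgue_on \<Omega>. \<bar>z y\<bar> \<le> M"
  shows "integrable (lebesgue_on \<Omega>) (\<lambda>y. \<gamma> x y * z y)"
    and "\<bar>LINT y|lebesgue_on \<Omega>. \<gamma> x y * z y\<bar> \<le> M * (LINT y|lebesgue_on \<Omega>. \<gamma> x y)"
proof -
  have m: "(\<lambda>y. \<gamma> x y) \<in> borel_measurable (lebesgue_on \<Omega>)" and nn: "AE y in lebesgue_on \<Omega>. 0 \<le> \<gamma> x y"
    using x AE_row_nonneg unfolding regular_points_def by auto
  have le: "AE y in lebesgue_on \<Omega>. \<bar>\<gamma> x y * z y\<bar> \<le> M * \<gamma> x y"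
    using zM nn
  proof eventually_elim
    case (elim y)
    then have "\<bar>z y\<bar> * \<gamma> x y \<le> M * \<gamma> x y" by (intro mult_right_mono) auto
    then show ?case using elim(2) by (simp add: abs_mult mult.commute)
  qed
  have "(\<lambda>y. \<gamma> x y * z y) \<in> borel_measurable (lebesgue_on \<Omega>)" using m z by measurable
  then show int: "integrable (lebesgue_on \<Omega>) (\<lambda>y. \<gamma> x y * z y)"
  proof (rule Bochner_Integration.integrable_bound[rotated])
    show "integrable (lebesgue_on \<Omega>) (\<lambda>y. M * \<gamma> x y)" using row_integrable(1)[OF x] by simp
    show "AE y in lebesgue_on \<Omega>. norm (\<gamma> x y * z y) \<le> norm (M * \<gamma> x y)"
      using le by eventually_elim simp
  qed
  have "\<bar>LINT y|lebesgue_on \<Omega>. \<gamma> x y * z y\<bar> \<le> (LINT y|lebesgue_on \<Omega>. \<bar>\<gamma> x y * z y\<bar>)"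
    by (rule integral_abs_bound)
  also have "\<dots> \<le> (LINT y|lebesgue_on \<Omega>. M * \<gamma> x y)"
    using int row_integrable(1)[OF x] le by (intro integral_mono_AE) auto
  finally show "\<bar>LINT y|lebesgue_on \<Omega>. \<gamma> x y * z y\<bar> \<le> M * (LINT y|lebesgue_on \<Omega>. \<gamma> x y)"
    by simp
qed

lemma Gam_eq_integral_diff:
  assumes x: "x \<in> regular_points" and z: "z \<in> borel_measurable (lebesgue_on \<Omega>)"
    and zM: "AE y in lebesgue_on \<Omega>. \<bar>z y\<bar> \<le> M"
  shows "Gam \<Omega> \<gamma> z x = (LINT y|lebesgue_on \<Omega>. \<gamma> x y * z y) - z x * (LINT y|lebesgue_on \<Omega>. \<gamma> x y)"
proof -
  have "Gam \<Omega> \<gamma> z x = (LINT y|lebesgue_on \<Omega>. \<gamma> x y * z y - z x * \<gamma> x y)"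
    unfolding Gam_def by (simp add: algebra_simps)
  then show ?thesis using row_product_integrable(1)[OF x z zM] row_integrable(1)[OF x] by simp
qed

lemma abs_Gam_le:
  assumes x: "x \<in> regular_points" and z: "z \<in> borel_measurable (lebesgue_on \<Omega>)"
    and zM: "AE y in lebesgue_on \<Omega>. \<bar>z y\<bar> \<le> M" and zx: "\<bar>z x\<bar> \<le> M"
  shows "\<bar>Gam \<Omega> \<gamma> z x\<bar> \<le> 2 * gi * M"
proof -
  define a where "a = (LINT y|lebesgue_on \<Omega>. \<gamma> x y)"
  have a: "0 \<le> a" "a \<le> gi" using row_integrable[OF x] unfolding a_def by auto
  have "\<bar>z x * a\<bar> \<le> M * a" using zx a by (simp add: abs_mult mult_right_mono)
  moreover have "M * a \<le> M * gi" using zx a by (intro mult_left_mono) auto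
  moreover have "\<bar>Gam \<Omega> \<gamma> z x\<bar> \<le> \<bar>LINT y|lebesgue_on \<Omega>. \<gamma> x y * z y\<bar> + \<bar>z x * a\<bar>"
    unfolding Gam_eq_integral_diff[OF x z zM] a_def by (rule abs_triangle_ineq4)
  ultimately have "\<bar>Gam \<Omega> \<gamma> z x\<bar> \<le> 2 * (M * gi)"
    using row_product_integrable(2)[OF x z zM] unfolding a_def by linarith
  then show ?thesis by (simp add: algebra_simps)
qed

lemma abs_Euler_step_le:
  assumes x: "x \<in> regular_points" and z: "z \<in> borel_measurable (lebesgue_on \<Omega>)"
    and zM: "AE y in lebesgue_on \<Omega>. \<bar>z y\<bar> \<le> M" and zx: "\<bar>z x\<bar> \<le> M"
    and h: "0 \<le> h" "0 \<le> c" "0 \<le> d" "h * c + h * d * gi \<le> 1"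
  shows "\<bar>(1 - h * c) * z x + h * d * Gam \<Omega> \<gamma> z x\<bar> \<le> (1 - h * c) * M"
proof -
  define a where "a = (LINT y|lebesgue_on \<Omega>. \<gamma> x y)"
  define I where "I = (LINT y|lebesgue_on \<Omega>. \<gamma> x y * z y)"
  have a: "0 \<le> a" "a \<le> gi" using row_integrable[OF x] unfolding a_def by auto
  have I: "\<bar>I\<bar> \<le> M * a" using row_product_integrable(2)[OF x z zM] unfolding a_def I_def .
  have hd: "0 \<le> h * d" "h * d * a \<le> h * d * gi" using h a by (auto intro: mult_left_mono)
  then have coeff: "0 \<le> 1 - h * c - h * d * a" using h by linarith
  have "(1 - h * c) * z x + h * d * Gam \<Omega> \<gamma> z x = (1 - h * c - h * d * a) * z x + h * d * I"
    unfolding Gam_eq_integral_diff[OF x z zM] a_def I_def by (simp add: algebra_simps)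
  also have "\<bar>\<dots>\<bar> \<le> (1 - h * c - h * d * a) * \<bar>z x\<bar> + h * d * \<bar>I\<bar>"
    by (rule abs_nonneg_combination_le[OF coeff hd(1)])
  also have "\<dots> \<le> (1 - h * c - h * d * a) * M + h * d * (M * a)"
    using coeff hd zx I by (intro add_mono mult_left_mono) auto
  finally show ?thesis by (simp add: algebra_simps)
qed

lemma Gam_diff:
  assumes x: "x \<in> regular_points"
    and w: "w1 \<in> borel_measurable (lebesgue_on \<Omega>)" "w2 \<in> borel_measurable (lebesgue_on \<Omega>)"
    and wK: "AE y in lebesgue_on \<Omega>. \<bar>w1 y\<bar> \<le> K" "AE y in lebesgue_on \<Omega>. \<bar>w2 y\<bar> \<le> K"
  shows "Gam \<Omega> \<gamma> w1 x - Gam \<Omega> \<gamma> w2 x = Gam \<Omega> \<gamma> (\<lambda>y. w1 y - w2 y) x"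
proof -
  have wd: "(\<lambda>y. w1 y - w2 y) \<in> borel_measurable (lebesgue_on \<Omega>)" using w by measurable
  have "AE y in lebesgue_on \<Omega>. \<bar>w1 y - w2 y\<bar> \<le> 2 * K" using wK by eventually_elim linarith
  note G = Gam_eq_integral_diff[OF x w(1) wK(1)] Gam_eq_integral_diff[OF x w(2) wK(2)]
    Gam_eq_integral_diff[OF x wd this]
  have I: "(LINT y|lebesgue_on \<Omega>. \<gamma> x y * (w1 y - w2 y))
      = (LINT y|lebesgue_on \<Omega>. \<gamma> x y * w1 y) - (LINT y|lebesgue_on \<Omega>. \<gamma> x y * w2 y)"
    using row_product_integrable(1)[OF x w(1) wK(1)] row_product_integrable(1)[OF x w(2) wK(2)]
    by (simp add: right_diff_distrib)
  show ?thesis unfolding G I by (simp add: algebra_simps)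
qed

lemma AE_abs_reaction_diffusion_le:
  assumes w: "w \<in> borel_measurable (lebesgue_on \<Omega>)" and wM: "AE x in lebesgue_on \<Omega>. \<bar>w x\<bar> \<le> M"
    and nN: "AE x in lebesgue_on \<Omega>. \<bar>n x\<bar> \<le> N" and "0 \<le> d" "0 \<le> c"
  shows "AE x in lebesgue_on \<Omega>. \<bar>d * Gam \<Omega> \<gamma> w x - c * w x + n x\<bar> \<le> 2 * gi * d * M + c * M + N"
  using AE_regular_point wM nN
proof eventually_elim
  case (elim x)
  have "\<bar>d * Gam \<Omega> \<gamma> w x - c * w x + n x\<bar> \<le> d * \<bar>Gam \<Omega> \<gamma> w x\<bar> + c * \<bar>w x\<bar> + \<bar>n x\<bar>"
    using assms(4,5) by (rule abs_scaled_sum_le)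
  also have "\<dots> \<le> d * (2 * gi * M) + c * M + N"
    using abs_Gam_le[OF elim(1) w wM elim(2)] elim assms(4,5) by (intro add_mono mult_left_mono) auto
  finally show ?case by (simp add: algebra_simps)
qed

lemma AE_abs_Euler_step_le:
  assumes w: "w \<in> borel_measurable (lebesgue_on \<Omega>)" and wM: "AE x in lebesgue_on \<Omega>. \<bar>w x\<bar> \<le> M"
    and nN: "AE x in lebesgue_on \<Omega>. \<bar>n x\<bar> \<le> N"
    and h: "0 < h" "0 \<le> c" "0 \<le> d" "h * c + h * d * gi \<le> 1"
    and step: "linf \<Omega> (\<lambda>x. (w' x - w x) / h - (d * Gam \<Omega> \<gamma> w x - c * w x + n x)) < ereal e"
  shows "AE x in lebesgue_on \<Omega>. \<bar>w' x\<bar> \<le> (1 - h * c) * M + h * N + h * e"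
  using AE_abs_less_of_linf_less[OF step] AE_regular_point wM nN
proof eventually_elim
  case (elim x)
  define D where "D = (w' x - w x) / h - (d * Gam \<Omega> \<gamma> w x - c * w x + n x)"
  have "w' x = ((1 - h * c) * w x + h * d * Gam \<Omega> \<gamma> w x) + h * n x + h * D"
    using h unfolding D_def by (simp add: field_simps)
  also have "\<bar>\<dots>\<bar> \<le> \<bar>(1 - h * c) * w x + h * d * Gam \<Omega> \<gamma> w x\<bar> + h * \<bar>n x\<bar> + h * \<bar>D\<bar>"
  proof -
    have "\<bar>h * n x\<bar> = h * \<bar>n x\<bar>" "\<bar>h * D\<bar> = h * \<bar>D\<bar>" using h by (simp_all add: abs_mult)
    then show ?thesis by linarith
  qed
  also have "\<dots> \<le> (1 - h * c) * M + h * N + h * e"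
    using abs_Euler_step_le[OF elim(2) w wM elim(3)] h elim(1,4) unfolding D_def[symmetric]
    by (intro add_mono mult_left_mono) auto
  finally show ?case .
qed

end

section \<open>Exponential decay from a one-sided derivative bound\<close>

lemma continuous_induction_le:
  fixes \<phi> g :: "real \<Rightarrow> real"
  assumes J: "is_interval J" "0 \<in> J" "J \<subseteq> {0..}"
    and cont: "continuous_on J \<phi>" "continuous_on J g"
    and init: "\<phi> 0 \<le> g 0"
    and step: "\<And>t. t \<in> J \<Longrightarrow> \<phi> t \<le> g t \<Longrightarrow> \<exists>\<delta>>0. \<forall>s\<in>J. t < s \<and> s < t + \<delta> \<longrightarrow> \<phi> s \<le> g s"
    and t1: "t1 \<in> J"
  shows "\<phi> t1 \<le> g t1"
proof (rule ccontr)
  assume bad: "\<not> \<phi> t1 \<le> g t1"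
  have J_le_t1: "s \<in> J" if "0 \<le> s" "s \<le> t1" for s
    using J(1,2) t1 that unfolding is_interval_1 by blast
  define S where "S = {t. 0 \<le> t \<and> t \<le> t1 \<and> (\<forall>s. 0 \<le> s \<and> s \<le> t \<longrightarrow> \<phi> s \<le> g s)}"
  have "0 \<in> S" unfolding S_def using init J(3) t1 by (auto intro!: antisym)
  have bdd: "bdd_above S" unfolding S_def by (auto intro: bdd_aboveI[of _ t1])
  define m where "m = Sup S"
  have m: "0 \<le> m" "m \<le> t1"
    unfolding m_def using cSup_upper[OF \<open>0 \<in> S\<close> bdd] \<open>0 \<in> S\<close> by (auto intro!: cSup_least simp: S_def)
  have below: "\<phi> s \<le> g s" if "0 \<le> s" "s < m" for s
  proof -
    obtain t where "t \<in> S" "s < t"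
      using \<open>s < m\<close> \<open>0 \<in> S\<close> bdd less_cSup_iff unfolding m_def by blast
    then show ?thesis using that unfolding S_def by auto
  qed
  have at_m: "\<phi> m \<le> g m"
  proof (cases "m = 0")
    case False
    then have "0 < m" using m by simp
    have "{0..m} \<subseteq> J" using J_le_t1 m by auto
    then have c: "continuous_on {0..m} (\<lambda>t. \<phi> t - g t)"
      using cont by (intro continuous_intros) (auto intro: continuous_on_subset)
    have "\<phi> m - g m \<le> 0"
    proof (rule continuous_le_on_closure[where S="{0..<m}" and f="\<lambda>t. \<phi> t - g t" and x=m])
      show "continuous_on (closure {0..<m}) (\<lambda>t. \<phi> t - g t)" using c \<open>0 < m\<close> by simp
      show "m \<in> closure {0..<m}" using \<open>0 < m\<close> by simp
      show "\<phi> s - g s \<le> 0" if "s \<in> {0..<m}" for s using below that by simp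
    qed
    then show ?thesis by simp
  qed (use init in simp)
  have "m < t1" using m at_m bad by (cases "m = t1") auto
  obtain \<delta> where \<delta>: "\<delta> > 0" "\<forall>s\<in>J. m < s \<and> s < m + \<delta> \<longrightarrow> \<phi> s \<le> g s"
    using step[OF J_le_t1[OF m] at_m] by blast
  define m' where "m' = min (m + \<delta>/2) t1"
  have "m' \<in> S" unfolding S_def
  proof (intro CollectI conjI allI impI)
    fix s assume "0 \<le> s \<and> s \<le> m'"
    then show "\<phi> s \<le> g s"
      using below at_m \<delta> J_le_t1[of s] m unfolding m'_def by (cases s m rule: linorder_cases) auto
  qed (use m \<delta> in \<open>auto simp: m'_def\<close>)
  then have "m' \<le> m" unfolding m_def using bdd by (rule cSup_upper)
  then show False using \<delta>(1) \<open>m < t1\<close> unfolding m'_def by auto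
qed

lemma exponential_decay_of_Dini_bound:
  fixes \<phi> :: "real \<Rightarrow> real"
  assumes J: "is_interval J" "0 \<in> J" "J \<subseteq> {0..}" and cont: "continuous_on J \<phi>"
    and step: "\<And>t \<epsilon>. t \<in> J \<Longrightarrow> \<phi> t < \<rho> \<Longrightarrow> 0 < \<epsilon> \<Longrightarrow>
      \<exists>\<delta>>0. \<forall>s\<in>J. t < s \<and> s < t + \<delta> \<longrightarrow> \<phi> s \<le> \<phi> t - (s - t) * \<alpha> * \<phi> t + (s - t) * \<epsilon>"
    and rates: "0 < \<beta>" "\<beta> < \<alpha>" and C: "0 < C" "C < \<rho>" "\<phi> 0 \<le> C" and t: "t \<in> J"
  shows "\<phi> t \<le> C * exp (- \<beta> * t)"
proof (rule continuous_induction_le[OF J cont _ _ _ t])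
  define g where "g t = C * exp (- \<beta> * t)" for t
  show "continuous_on J (\<lambda>t. C * exp (- \<beta> * t))" by (intro continuous_intros)
  show "\<phi> 0 \<le> C * exp (- \<beta> * 0)" using C by simp
  fix t assume t: "t \<in> J" and le: "\<phi> t \<le> C * exp (- \<beta> * t)"
  have "g t \<le> C" using C rates J(3) t unfolding g_def by auto
  then have "\<phi> t < \<rho>" using le C unfolding g_def by linarith
  have "0 < g t" unfolding g_def using C by simp
  then obtain \<delta> where \<delta>: "\<delta> > 0" "\<forall>s\<in>J. t < s \<and> s < t + \<delta> \<longrightarrow>
      \<phi> s \<le> \<phi> t - (s - t) * \<alpha> * \<phi> t + (s - t) * ((\<alpha> - \<beta>) * g t / 2)"
    using step[OF t \<open>\<phi> t < \<rho>\<close>, of "(\<alpha> - \<beta>) * g t / 2"] rates by auto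
  show "\<exists>\<delta>>0. \<forall>s\<in>J. t < s \<and> s < t + \<delta> \<longrightarrow> \<phi> s \<le> C * exp (- \<beta> * s)"
  proof (intro exI[of _ "min \<delta> (1 / \<alpha>)"] conjI ballI impI)
    show "0 < min \<delta> (1 / \<alpha>)" using \<delta> rates by simp
    fix s assume s: "s \<in> J" "t < s \<and> s < t + min \<delta> (1 / \<alpha>)"
    define h where "h = s - t"
    have "0 < h" "h < 1 / \<alpha>" using s unfolding h_def by auto
    then have h: "0 < h" "h * \<alpha> \<le> 1" using rates by (auto simp: less_divide_eq)
    have "\<phi> s \<le> (1 - h * \<alpha>) * \<phi> t + h * ((\<alpha> - \<beta>) * g t / 2)"
      using \<delta>(2) s unfolding h_def by (auto simp: algebra_simps)
    also have "\<dots> \<le> (1 - h * \<alpha>) * g t + h * ((\<alpha> - \<beta>) * g t / 2)"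
      using le h unfolding g_def by (intro add_mono mult_left_mono) auto
    also have "\<dots> = g t * (1 + (- \<beta> * h)) - h * ((\<alpha> - \<beta>) * g t / 2)"
      by (simp add: algebra_simps)
    also have "\<dots> \<le> g t * (1 + (- \<beta> * h))"
      using h rates \<open>0 < g t\<close> by simp
    also have "\<dots> \<le> g t * exp (- \<beta> * h)"
      using \<open>0 < g t\<close> by (intro mult_left_mono exp_ge_add_one_self) auto
    also have "\<dots> = C * exp (- \<beta> * s)" unfolding g_def h_def by (simp add: algebra_simps flip: exp_add)
    finally show "\<phi> s \<le> C * exp (- \<beta> * s)" .
  qed
qed

section \<open>Decay of small perturbations of the steady state\<close>

locale gray_scott = open_domain \<Omega> + k1: nonlocal_kernel \<Omega> \<gamma>1 gi + k2: nonlocal_kernel \<Omega> \<gamma>2 gi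
  for \<Omega> :: "'a::euclidean_space set" and \<gamma>1 \<gamma>2 :: "'a \<Rightarrow> 'a \<Rightarrow> real" and gi :: real +
  fixes d1 d2 f \<kappa> :: real
  assumes d1_pos: "0 < d1" and d2_pos: "0 < d2" and f_pos: "0 < f" and \<kappa>_pos: "0 < \<kappa>"
begin

text \<open>Below this size the quadratic reaction term is dominated by half of the linear damping \<open>f\<close>.\<close>
definition attraction_radius :: real where
  "attraction_radius = min 1 (f / 8)"

lemma attraction_radius_pos: "0 < attraction_radius"
  unfolding attraction_radius_def using f_pos by simp

lemma reaction_absorbed:
  assumes "0 \<le> p" "0 \<le> q" "p + q < attraction_radius"
  shows "2 * ((1 + p) * q\<^sup>2) \<le> f / 2 * (p + q)"
proof -
  have "1 + p \<le> 2" "q \<le> f / 8" using assms unfolding attraction_radius_def by auto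
  have "(1 + p) * q\<^sup>2 \<le> 2 * q\<^sup>2" using \<open>1 + p \<le> 2\<close> by (intro mult_right_mono) auto
  also have "q\<^sup>2 \<le> q * (f / 8)"
    using \<open>q \<le> f / 8\<close> assms(2) unfolding power2_eq_square by (rule mult_left_mono)
  finally have "2 * ((1 + p) * q\<^sup>2) \<le> f / 2 * q" by simp
  also have "\<dots> \<le> f / 2 * (p + q)" using assms(1) f_pos by simp
  finally show ?thesis .
qed

end

text \<open>\<open>W = u - 1\<close> and \<open>V = v\<close>, with the reaction terms left abstract: this covers solutions of the
  system (\<open>n2 = - n1 = u v\<^sup>2\<close>) as well as of the system with truncated reaction term.\<close>
locale perturbation = gray_scott +
  fixes J :: "real set" and W V n1 n2 :: "real \<Rightarrow> 'a \<Rightarrow> real"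
  assumes interval: "is_interval J" "0 \<in> J" "J \<subseteq> {0..}"
    and W_in_X: "\<And>t. t \<in> J \<Longrightarrow> inX \<Omega> (W t)" and V_in_X: "\<And>t. t \<in> J \<Longrightarrow> inX \<Omega> (V t)"
    and W_deriv: "\<And>t. t \<in> J \<Longrightarrow> ((\<lambda>s. linf \<Omega> (\<lambda>x. (W s x - W t x) / (s - t)
        - (d1 * Gam \<Omega> \<gamma>1 (W t) x - f * W t x + n1 t x))) \<longlongrightarrow> 0) (at t within J)"
    and V_deriv: "\<And>t. t \<in> J \<Longrightarrow> ((\<lambda>s. linf \<Omega> (\<lambda>x. (V s x - V t x) / (s - t)
        - (d2 * Gam \<Omega> \<gamma>2 (V t) x - (f + \<kappa>) * V t x + n2 t x))) \<longlongrightarrow> 0) (at t within J)"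
    and reaction_le: "\<And>t. t \<in> J \<Longrightarrow> AE x in lebesgue_on \<Omega>.
        \<bar>n1 t x\<bar> \<le> (1 + \<bar>W t x\<bar>) * (V t x)\<^sup>2 \<and> \<bar>n2 t x\<bar> \<le> (1 + \<bar>W t x\<bar>) * (V t x)\<^sup>2"
begin

definition deviation :: "real \<Rightarrow> real" where
  "deviation t = linf_norm \<Omega> (W t) + linf_norm \<Omega> (V t)"

lemma W_measurable: "t \<in> J \<Longrightarrow> W t \<in> borel_measurable (lebesgue_on \<Omega>)"
  and V_measurable: "t \<in> J \<Longrightarrow> V t \<in> borel_measurable (lebesgue_on \<Omega>)"
  using W_in_X V_in_X unfolding inX_def by auto

lemma AE_abs_reaction_le:
  assumes t: "t \<in> J"
  defines "N \<equiv> (1 + linf_norm \<Omega> (W t)) * (linf_norm \<Omega> (V t))\<^sup>2"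
  shows "AE x in lebesgue_on \<Omega>. \<bar>n1 t x\<bar> \<le> N" "AE x in lebesgue_on \<Omega>. \<bar>n2 t x\<bar> \<le> N"
proof -
  have "AE x in lebesgue_on \<Omega>. \<bar>n1 t x\<bar> \<le> N \<and> \<bar>n2 t x\<bar> \<le> N"
    using reaction_le[OF t] inX_linf_norm(3)[OF W_in_X[OF t]] inX_linf_norm(3)[OF V_in_X[OF t]]
  proof eventually_elim
    case (elim x)
    have "(V t x)\<^sup>2 \<le> (linf_norm \<Omega> (V t))\<^sup>2" using power_mono[OF elim(3) abs_ge_zero, of 2] by simp
    then have "(1 + \<bar>W t x\<bar>) * (V t x)\<^sup>2 \<le> N"
      unfolding N_def using elim(2) by (intro mult_mono) auto
    then show ?case using elim(1) by linarith
  qed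
  then show "AE x in lebesgue_on \<Omega>. \<bar>n1 t x\<bar> \<le> N" "AE x in lebesgue_on \<Omega>. \<bar>n2 t x\<bar> \<le> N"
    by (auto elim: eventually_mono)
qed

lemma deviation_continuous: "continuous_on J deviation"
  unfolding continuous_on_eq_continuous_within deviation_def
proof (intro ballI continuous_add)
  fix t assume t: "t \<in> J"
  show "continuous (at t within J) (\<lambda>s. linf_norm \<Omega> (W s))"
    by (rule linf_norm_continuous_within[OF W_in_X t W_deriv[OF t] k1.AE_abs_reaction_diffusion_le[OF
          W_measurable[OF t] inX_linf_norm(3)[OF W_in_X[OF t]] AE_abs_reaction_le(1)[OF t]]])
      (use d1_pos f_pos in auto)
  show "continuous (at t within J) (\<lambda>s. linf_norm \<Omega> (V s))"
    by (rule linf_norm_continuous_within[OF V_in_X t V_deriv[OF t] k2.AE_abs_reaction_diffusion_le[OF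
          V_measurable[OF t] inX_linf_norm(3)[OF V_in_X[OF t]] AE_abs_reaction_le(2)[OF t]]])
      (use d2_pos f_pos \<kappa>_pos in auto)
qed

lemma deviation_Euler_step:
  assumes t: "t \<in> J" and s: "s \<in> J" "t < s" "(s - t) * (f + \<kappa> + (d1 + d2) * gi) \<le> 1"
    and W_close: "linf \<Omega> (\<lambda>x. (W s x - W t x) / (s - t)
        - (d1 * Gam \<Omega> \<gamma>1 (W t) x - f * W t x + n1 t x)) < ereal e"
    and V_close: "linf \<Omega> (\<lambda>x. (V s x - V t x) / (s - t)
        - (d2 * Gam \<Omega> \<gamma>2 (V t) x - (f + \<kappa>) * V t x + n2 t x)) < ereal e"
  defines "p \<equiv> linf_norm \<Omega> (W t)" and "q \<equiv> linf_norm \<Omega> (V t)"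
  shows "deviation s \<le> (1 - (s - t) * f) * p + (1 - (s - t) * (f + \<kappa>)) * q
    + (s - t) * (2 * ((1 + p) * q\<^sup>2)) + (s - t) * (2 * e)"
proof -
  define h where "h = s - t"
  have h: "0 < h" using s unfolding h_def by simp
  have "h * f + h * d1 * gi \<le> h * (f + \<kappa> + (d1 + d2) * gi)"
    "h * (f + \<kappa>) + h * d2 * gi \<le> h * (f + \<kappa> + (d1 + d2) * gi)"
    using h k1.mass_bound_nonneg d1_pos d2_pos \<kappa>_pos by (simp_all add: algebra_simps)
  then have small_step: "h * f + h * d1 * gi \<le> 1" "h * (f + \<kappa>) + h * d2 * gi \<le> 1"
    using s unfolding h_def by linarith+
  have "linf_norm \<Omega> (W s) \<le> (1 - h * f) * p + h * ((1 + p) * q\<^sup>2) + h * e"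
    using k1.AE_abs_Euler_step_le[OF W_measurable[OF t] inX_linf_norm(3)[OF W_in_X[OF t]]
        AE_abs_reaction_le(1)[OF t] h _ _ small_step(1), where w'="W s" and e=e] W_close f_pos d1_pos
    unfolding p_def q_def h_def by (intro linf_norm_le W_in_X s) auto
  moreover have "linf_norm \<Omega> (V s) \<le> (1 - h * (f + \<kappa>)) * q + h * ((1 + p) * q\<^sup>2) + h * e"
    using k2.AE_abs_Euler_step_le[OF V_measurable[OF t] inX_linf_norm(3)[OF V_in_X[OF t]]
        AE_abs_reaction_le(2)[OF t] h _ _ small_step(2), where w'="V s" and e=e] V_close f_pos \<kappa>_pos d2_pos
    unfolding p_def q_def h_def by (intro linf_norm_le V_in_X s) auto
  ultimately show ?thesis unfolding deviation_def h_def by (simp add: algebra_simps)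
qed

lemma deviation_Euler_step_near:
  assumes t: "t \<in> J" and e: "0 < e"
  defines "p \<equiv> linf_norm \<Omega> (W t)" and "q \<equiv> linf_norm \<Omega> (V t)"
  shows "\<exists>\<delta>>0. \<forall>s\<in>J. t < s \<and> s < t + \<delta> \<longrightarrow> deviation s \<le> (1 - (s - t) * f) * p
    + (1 - (s - t) * (f + \<kappa>)) * q + (s - t) * (2 * ((1 + p) * q\<^sup>2)) + (s - t) * (2 * e)"
proof -
  have "eventually (\<lambda>s. linf \<Omega> (\<lambda>x. (W s x - W t x) / (s - t)
        - (d1 * Gam \<Omega> \<gamma>1 (W t) x - f * W t x + n1 t x)) < ereal e
      \<and> linf \<Omega> (\<lambda>x. (V s x - V t x) / (s - t)
        - (d2 * Gam \<Omega> \<gamma>2 (V t) x - (f + \<kappa>) * V t x + n2 t x)) < ereal e) (at t within J)"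
    using order_tendstoD(2)[OF W_deriv[OF t]] order_tendstoD(2)[OF V_deriv[OF t]] e
    by (auto intro: eventually_conj)
  then obtain \<delta> where \<delta>: "0 < \<delta>" and close: "\<And>s. s \<in> J \<Longrightarrow> s \<noteq> t \<Longrightarrow> dist s t < \<delta> \<Longrightarrow>
        linf \<Omega> (\<lambda>x. (W s x - W t x) / (s - t)
        - (d1 * Gam \<Omega> \<gamma>1 (W t) x - f * W t x + n1 t x)) < ereal e
      \<and> linf \<Omega> (\<lambda>x. (V s x - V t x) / (s - t)
        - (d2 * Gam \<Omega> \<gamma>2 (V t) x - (f + \<kappa>) * V t x + n2 t x)) < ereal e"
    unfolding eventually_at by blast
  define h0 where "h0 = 1 / (f + \<kappa> + (d1 + d2) * gi)"
  have "0 < f + \<kappa> + (d1 + d2) * gi"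
    using f_pos \<kappa>_pos d1_pos d2_pos k1.mass_bound_nonneg by (simp add: add_pos_nonneg)
  then have h0: "0 < h0" "\<And>h. h \<le> h0 \<Longrightarrow> h * (f + \<kappa> + (d1 + d2) * gi) \<le> 1"
    unfolding h0_def by (auto simp: field_simps)
  show ?thesis
  proof (intro exI[of _ "min \<delta> h0"] conjI ballI impI)
    show "0 < min \<delta> h0" using \<delta> h0 by simp
    fix s assume s: "s \<in> J" "t < s \<and> s < t + min \<delta> h0"
    then have "s - t \<le> h0" "s \<noteq> t" "dist s t < \<delta>" by (auto simp: dist_real_def)
    then show "deviation s \<le> (1 - (s - t) * f) * p + (1 - (s - t) * (f + \<kappa>)) * q
        + (s - t) * (2 * ((1 + p) * q\<^sup>2)) + (s - t) * (2 * e)"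
      using deviation_Euler_step[OF t s(1) _ h0(2)] close[OF s(1)] s unfolding p_def q_def by blast
  qed
qed

lemma deviation_Dini_bound:
  assumes t: "t \<in> J" and small: "deviation t < attraction_radius" and \<epsilon>: "0 < \<epsilon>"
  shows "\<exists>\<delta>>0. \<forall>s\<in>J. t < s \<and> s < t + \<delta> \<longrightarrow> deviation s \<le> deviation t - (s - t) * (f / 2) * deviation t + (s - t) * \<epsilon>"
proof -
  define p where "p = linf_norm \<Omega> (W t)"
  define q where "q = linf_norm \<Omega> (V t)"
  have pq: "0 \<le> p" "0 \<le> q" "deviation t = p + q"
    using inX_linf_norm(2) W_in_X[OF t] V_in_X[OF t] unfolding p_def q_def deviation_def by auto
  obtain \<delta> where \<delta>: "0 < \<delta>" "\<forall>s\<in>J. t < s \<and> s < t + \<delta> \<longrightarrow> deviation s \<le> (1 - (s - t) * f) * p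
      + (1 - (s - t) * (f + \<kappa>)) * q + (s - t) * (2 * ((1 + p) * q\<^sup>2)) + (s - t) * (2 * (\<epsilon> / 2))"
    using deviation_Euler_step_near[OF t, of "\<epsilon> / 2"] \<epsilon> unfolding p_def q_def by auto
  show ?thesis
  proof (intro exI[of _ \<delta>] conjI ballI impI)
    fix s assume s: "s \<in> J" "t < s \<and> s < t + \<delta>"
    have "deviation s \<le> (1 - (s - t) * f) * p + (1 - (s - t) * (f + \<kappa>)) * q
        + (s - t) * (2 * ((1 + p) * q\<^sup>2)) + (s - t) * (2 * (\<epsilon> / 2))"
      using \<delta>(2) s by blast
    also have "\<dots> = (p + q) - (s - t) * f * (p + q) - (s - t) * \<kappa> * q
        + (s - t) * (2 * ((1 + p) * q\<^sup>2)) + (s - t) * \<epsilon>"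
      by (simp add: algebra_simps)
    also have "\<dots> \<le> (p + q) - (s - t) * f * (p + q) + (s - t) * (f / 2 * (p + q)) + (s - t) * \<epsilon>"
    proof -
      have "(s - t) * (2 * ((1 + p) * q\<^sup>2)) \<le> (s - t) * (f / 2 * (p + q))"
        using reaction_absorbed[OF pq(1,2)] small pq(3) s by (intro mult_left_mono) auto
      moreover have "0 \<le> (s - t) * \<kappa> * q" using s \<kappa>_pos pq(2) by simp
      ultimately show ?thesis by linarith
    qed
    also have "\<dots> = deviation t - (s - t) * (f / 2) * deviation t + (s - t) * \<epsilon>"
      unfolding pq(3) by (simp add: algebra_simps)
    finally show "deviation s \<le> deviation t - (s - t) * (f / 2) * deviation t + (s - t) * \<epsilon>" .
  qed (rule \<delta>(1))
qed

lemma deviation_decay: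
  assumes "0 < C" "C < attraction_radius" "deviation 0 \<le> C" "t \<in> J"
  shows "deviation t \<le> C * exp (- (f / 4) * t)"
  using exponential_decay_of_Dini_bound[OF interval deviation_continuous deviation_Dini_bound _ _ assms,
      where \<beta>="f / 4"] f_pos by auto

end

lemma time_interval_props: "J \<in> time_intervals \<Longrightarrow> is_interval J \<and> 0 \<in> J \<and> J \<subseteq> {0..}"
  unfolding time_intervals_def is_interval_1 by auto

lemma (in open_domain) dist10_eq_linf_norm:
  assumes "inX \<Omega> u" "inX \<Omega> v"
  shows "dist10 \<Omega> u v = ereal (linf_norm \<Omega> (\<lambda>x. u x - 1) + linf_norm \<Omega> v)"
  using inX_linf_norm(1)[OF inX_diff_const[OF assms(1)]] inX_linf_norm(1)[OF assms(2)]
  unfolding dist10_def by simp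

context gray_scott
begin

lemma solution_is_perturbation:
  assumes J: "J \<in> time_intervals" and sol: "is_sol \<Omega> d1 d2 f \<kappa> \<gamma>1 \<gamma>2 J U V"
  shows "perturbation \<Omega> \<gamma>1 \<gamma>2 gi d1 d2 f \<kappa> J (\<lambda>t x. U t x - 1) V
    (\<lambda>t x. - (U t x * (V t x)\<^sup>2)) (\<lambda>t x. U t x * (V t x)\<^sup>2)"
proof unfold_locales
  show "is_interval J" "0 \<in> J" "J \<subseteq> {0..}" using time_interval_props[OF J] by auto
  show "inX \<Omega> (\<lambda>x. U t x - 1)" "inX \<Omega> (V t)" if "t \<in> J" for t
    using sol that inX_diff_const unfolding is_sol_def by auto
  show "((\<lambda>s. linf \<Omega> (\<lambda>x. (U s x - 1 - (U t x - 1)) / (s - t) - (d1 * Gam \<Omega> \<gamma>1 (\<lambda>x. U t x - 1) x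
      - f * (U t x - 1) + - (U t x * (V t x)\<^sup>2)))) \<longlongrightarrow> 0) (at t within J)" if "t \<in> J" for t
    using sol that unfolding is_sol_def Gam_shift by (simp add: algebra_simps)
  show "((\<lambda>s. linf \<Omega> (\<lambda>x. (V s x - V t x) / (s - t) - (d2 * Gam \<Omega> \<gamma>2 (V t) x
      - (f + \<kappa>) * V t x + U t x * (V t x)\<^sup>2))) \<longlongrightarrow> 0) (at t within J)" if "t \<in> J" for t
    using sol that unfolding is_sol_def by (simp add: algebra_simps)
  show "AE x in lebesgue_on \<Omega>. \<bar>- (U t x * (V t x)\<^sup>2)\<bar> \<le> (1 + \<bar>U t x - 1\<bar>) * (V t x)\<^sup>2
      \<and> \<bar>U t x * (V t x)\<^sup>2\<bar> \<le> (1 + \<bar>U t x - 1\<bar>) * (V t x)\<^sup>2" for t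
  proof (rule AE_I2)
    fix x
    have "\<bar>U t x\<bar> * (V t x)\<^sup>2 \<le> (1 + \<bar>U t x - 1\<bar>) * (V t x)\<^sup>2" by (intro mult_right_mono) auto
    then show "\<bar>- (U t x * (V t x)\<^sup>2)\<bar> \<le> (1 + \<bar>U t x - 1\<bar>) * (V t x)\<^sup>2
      \<and> \<bar>U t x * (V t x)\<^sup>2\<bar> \<le> (1 + \<bar>U t x - 1\<bar>) * (V t x)\<^sup>2" by (simp add: abs_mult)
  qed
qed

lemma solution_decay:
  assumes J: "J \<in> time_intervals" and sol: "is_sol \<Omega> d1 d2 f \<kappa> \<gamma>1 \<gamma>2 J U V"
    and C: "0 < C" "C < attraction_radius" "dist10 \<Omega> (U 0) (V 0) \<le> ereal C" and t: "t \<in> J"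
  shows "dist10 \<Omega> (U t) (V t) \<le> ereal (C * exp (- (f / 4) * t))"
proof -
  interpret perturbation \<Omega> \<gamma>1 \<gamma>2 gi d1 d2 f \<kappa> J "\<lambda>t x. U t x - 1" V
      "\<lambda>t x. - (U t x * (V t x)\<^sup>2)" "\<lambda>t x. U t x * (V t x)\<^sup>2"
    by (rule solution_is_perturbation[OF J sol])
  have dist: "dist10 \<Omega> (U s) (V s) = ereal (deviation s)" if "s \<in> J" for s
    using dist10_eq_linf_norm sol that unfolding is_sol_def deviation_def by auto
  show ?thesis using deviation_decay[OF C(1,2) _ t] C(3) dist[OF t] dist[OF interval(2)] by simp
qed

lemma lyapunov_stable:
  "\<forall>\<epsilon>>0. \<exists>\<delta>>0. \<forall>J\<in>time_intervals. \<forall>U V.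
    is_sol \<Omega> d1 d2 f \<kappa> \<gamma>1 \<gamma>2 J U V \<and> dist10 \<Omega> (U 0) (V 0) < ereal \<delta>
    \<longrightarrow> (\<forall>t\<in>J. dist10 \<Omega> (U t) (V t) < ereal \<epsilon>)"
proof (intro allI impI)
  fix \<epsilon> :: real assume "0 < \<epsilon>"
  define \<delta> where "\<delta> = min \<epsilon> attraction_radius / 2"
  have \<delta>: "0 < \<delta>" "\<delta> < attraction_radius" "\<delta> < \<epsilon>"
    unfolding \<delta>_def using \<open>0 < \<epsilon>\<close> attraction_radius_pos by auto
  have "dist10 \<Omega> (U t) (V t) < ereal \<epsilon>"
    if J: "J \<in> time_intervals" and sol: "is_sol \<Omega> d1 d2 f \<kappa> \<gamma>1 \<gamma>2 J U V"
      and small: "dist10 \<Omega> (U 0) (V 0) < ereal \<delta>" and t: "t \<in> J" for J U V t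
  proof -
    have "dist10 \<Omega> (U t) (V t) \<le> ereal (\<delta> * exp (- (f / 4) * t))"
      using solution_decay[OF J sol \<delta>(1,2) _ t] small by simp
    also have "\<delta> * exp (- (f / 4) * t) \<le> \<delta>"
      using \<delta>(1) f_pos time_interval_props[OF J] t by (auto simp: mult_left_le)
    finally show ?thesis using \<delta>(3) by (simp add: le_less_trans)
  qed
  then show "\<exists>\<delta>>0. \<forall>J\<in>time_intervals. \<forall>U V. is_sol \<Omega> d1 d2 f \<kappa> \<gamma>1 \<gamma>2 J U V
      \<and> dist10 \<Omega> (U 0) (V 0) < ereal \<delta> \<longrightarrow> (\<forall>t\<in>J. dist10 \<Omega> (U t) (V t) < ereal \<epsilon>)"
    using \<delta>(1) by blast
qed

lemma small_solutions_converge: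
  assumes sol: "is_sol \<Omega> d1 d2 f \<kappa> \<gamma>1 \<gamma>2 {0..} U V"
    and small: "dist10 \<Omega> (U 0) (V 0) < ereal (attraction_radius / 2)"
  shows "((\<lambda>t. dist10 \<Omega> (U t) (V t)) \<longlongrightarrow> 0) at_top"
proof (rule tendsto_sandwich[where f="\<lambda>_. 0"])
  have J: "{0..} \<in> time_intervals" unfolding time_intervals_def by simp
  show "eventually (\<lambda>t. dist10 \<Omega> (U t) (V t) \<le> ereal (attraction_radius / 2 * exp (- (f / 4) * t))) at_top"
    using solution_decay[OF J sol, of "attraction_radius / 2"] small attraction_radius_pos
    by (intro eventually_at_top_linorderI[of 0]) (auto simp: less_imp_le)
  have "filterlim (\<lambda>t. - (f / 4) * t) at_bot at_top"
    by (rule filterlim_tendsto_neg_mult_at_bot[OF tendsto_const _ filterlim_ident]) (use f_pos in simp)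
  then have "((\<lambda>t. exp (- (f / 4) * t)) \<longlongrightarrow> 0) at_top"
    using filterlim_compose[OF exp_at_bot] by blast
  then have "((\<lambda>t. attraction_radius / 2 * exp (- (f / 4) * t)) \<longlongrightarrow> 0) at_top"
    by (rule tendsto_mult_right_zero)
  then show "((\<lambda>t. ereal (attraction_radius / 2 * exp (- (f / 4) * t))) \<longlongrightarrow> 0) at_top"
    by (simp add: zero_ereal_def)
  show "eventually (\<lambda>t. 0 \<le> dist10 \<Omega> (U t) (V t)) at_top"
    unfolding dist10_def using linf_nonneg by simp
qed simp

end

section \<open>Global existence of small solutions\<close>

context nonlocal_kernel
begin

text \<open>\<open>\<Gamma>\<close> at regular points and \<open>0\<close> elsewhere: bounded at every point, so that it can enter a
  vector field on a space of everywhere bounded functions, and still equal to \<open>\<Gamma>\<close> almost everywhere.\<close>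
definition Gam_reg :: "('a \<Rightarrow> real) \<Rightarrow> 'a \<Rightarrow> real" where
  "Gam_reg w x = (if x \<in> regular_points \<and> w \<in> borel_measurable (lebesgue_on \<Omega>) then Gam \<Omega> \<gamma> w x else 0)"

lemma abs_Gam_reg_le:
  assumes "\<And>y. \<bar>w y\<bar> \<le> M"
  shows "\<bar>Gam_reg w x\<bar> \<le> 2 * gi * M"
  using abs_Gam_le[of x w M] assms mass_bound_nonneg order_trans[OF abs_ge_zero assms]
  unfolding Gam_reg_def by auto

lemma Gam_reg_diff:
  assumes "w1 \<in> borel_measurable (lebesgue_on \<Omega>)" "w2 \<in> borel_measurable (lebesgue_on \<Omega>)"
    and "\<And>y. \<bar>w1 y\<bar> \<le> K" "\<And>y. \<bar>w2 y\<bar> \<le> K"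
  shows "Gam_reg w1 x - Gam_reg w2 x = Gam_reg (\<lambda>y. w1 y - w2 y) x"
  using Gam_diff[of x w1 w2 K] assms unfolding Gam_reg_def by auto

lemma AE_Gam_reg_eq:
  "w \<in> borel_measurable (lebesgue_on \<Omega>) \<Longrightarrow> AE x in lebesgue_on \<Omega>. Gam_reg w x = Gam \<Omega> \<gamma> w x"
  using AE_regular_point by eventually_elim (simp add: Gam_reg_def)

lemma Gam_reg_measurable:
  "w \<in> borel_measurable (lebesgue_on \<Omega>) \<Longrightarrow> Gam_reg w \<in> borel_measurable (lebesgue_on \<Omega>)"
  using AE_Gam_reg_eq Gam_measurable
  by (blast intro: borel_measurable_lebesgue_on_AE_cong[OF domain_sets_lebesgue] AE_symmetric)

end

text \<open>Bounded functions on \<open>'a \<times> bool\<close> with the sup norm form a Banach space; they are realised as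
  bounded continuous functions for the discrete topology. The component \<open>True\<close> carries \<open>u - 1\<close>
  and the component \<open>False\<close> carries \<open>v\<close>.\<close>
type_synonym 'a state = "('a \<times> bool) discrete \<Rightarrow>\<^sub>C real"

instance bcontfun :: (metric_space, banach) banach ..

definition component :: "'a state \<Rightarrow> 'a \<Rightarrow> bool \<Rightarrow> real" where
  "component z x b = apply_bcontfun z (discrete (x, b))"

definition state_of :: "('a \<Rightarrow> bool \<Rightarrow> real) \<Rightarrow> 'a state" where
  "state_of g = Bcontfun (\<lambda>p. g (fst (of_discrete p)) (snd (of_discrete p)))"

lemma continuous_on_discrete: "continuous_on UNIV (h :: 'b discrete \<Rightarrow> 'c::topological_space)"
  unfolding continuous_on_open_invariant by (auto intro!: exI[of _ "h -` _"] simp: open_discrete)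

lemma component_state_of:
  assumes "\<And>x b. \<bar>g x b\<bar> \<le> K"
  shows "component (state_of g) x b = g x b"
proof -
  have "(\<lambda>p. g (fst (of_discrete p)) (snd (of_discrete p))) \<in> bcontfun"
    by (rule bcontfun_normI[OF continuous_on_discrete]) (use assms in simp)
  then show ?thesis unfolding component_def state_of_def by (simp add: Bcontfun_inverse discrete_inverse)
qed

lemma abs_component_le_norm: "\<bar>component z x b\<bar> \<le> norm z"
  unfolding component_def using norm_bounded[of z] by simp

lemma abs_component_diff_le: "\<bar>component z1 x b - component z2 x b\<bar> \<le> norm (z1 - z2)"
  using abs_component_le_norm[of "z1 - z2" x b] unfolding component_def by simp

lemma norm_le_of_components:
  assumes "\<And>x b. \<bar>component z x b\<bar> \<le> K"
  shows "norm z \<le> K"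
proof (rule norm_bound)
  fix p :: "('a \<times> bool) discrete"
  obtain x b where "p = discrete (x, b)" by (metis of_discrete_inverse surj_pair)
  then show "norm (apply_bcontfun z p) \<le> K" using assms[of x b] unfolding component_def by simp
qed

lemma component_simps [simp]:
  "component (z1 + z2) x b = component z1 x b + component z2 x b"
  "component (z1 - z2) x b = component z1 x b - component z2 x b"
  "component (c *\<^sub>R z) x b = c * component z x b"
  "component 0 x b = 0"
  unfolding component_def by simp_all

lemma tendsto_component:
  assumes "(zs \<longlongrightarrow> z) F"
  shows "((\<lambda>n. component (zs n) x b) \<longlongrightarrow> component z x b) F"
proof (rule tendstoI)
  fix e :: real assume "0 < e"
  with tendstoD[OF assms] have "eventually (\<lambda>n. dist (zs n) z < e) F" by blast
  then show "eventually (\<lambda>n. dist (component (zs n) x b) (component z x b) < e) F"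
    by eventually_elim (simp add: component_def le_less_trans[OF dist_bounded])
qed

definition measurable_states :: "'a::euclidean_space set \<Rightarrow> 'a state set" where
  "measurable_states \<Omega> = {z. \<forall>b. (\<lambda>x. component z x b) \<in> borel_measurable (lebesgue_on \<Omega>)}"

lemma closed_measurable_states: "closed (measurable_states \<Omega>)"
  unfolding closed_sequential_limits measurable_states_def
  by (auto intro: borel_measurable_LIMSEQ_real tendsto_component)

lemma subspace_measurable_states: "subspace (measurable_states \<Omega>)"
  unfolding subspace_def measurable_states_def
  by (auto intro: borel_measurable_add borel_measurable_times)

lemma (in nonlocal_kernel) abs_Gam_reg_components_diff_le:
  assumes "z1 \<in> measurable_states \<Omega>" "z2 \<in> measurable_states \<Omega>"
  shows "\<bar>Gam_reg (\<lambda>y. component z1 y b) x - Gam_reg (\<lambda>y. component z2 y b) x\<bar> \<le> 2 * gi * norm (z1 - z2)"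
proof -
  have "\<bar>component zi y b\<bar> \<le> norm z1 + norm z2" if "zi \<in> {z1, z2}" for zi y
    using that abs_component_le_norm[of z1 y b] abs_component_le_norm[of z2 y b] by auto
  then show ?thesis
    using assms unfolding measurable_states_def
    by (subst Gam_reg_diff[where K="norm z1 + norm z2"]) (auto intro: abs_Gam_reg_le abs_component_diff_le)
qed

lemma integral_in_closed_subspace:
  fixes f :: "'n::euclidean_space \<Rightarrow> 'b::real_normed_vector"
  assumes S: "closed S" "subspace S"
    and f: "(f has_integral y) (cbox a c)" "\<And>x. x \<in> cbox a c \<Longrightarrow> f x \<in> S"
  shows "y \<in> S"
proof -
  have "\<exists>z\<in>S. dist z y < e" if "0 < e" for e
  proof -
    obtain g where g: "gauge g" "\<forall>D. D tagged_division_of (cbox a c) \<and> g fine D \<longrightarrow>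
        norm ((\<Sum>(x, k)\<in>D. Henstock_Kurzweil_Integration.content k *\<^sub>R f x) - y) < e"
      using f(1)[unfolded has_integral, rule_format, OF \<open>0 < e\<close>] by (elim exE conjE) (rule that)
    obtain D where D: "D tagged_division_of (cbox a c)" "g fine D"
      by (rule fine_division_exists[OF g(1)])
    have "(\<Sum>(x, k)\<in>D. Henstock_Kurzweil_Integration.content k *\<^sub>R f x) \<in> S"
    proof (rule subspace_sum[OF S(2)])
      fix p assume "p \<in> D"
      then obtain x k where "p = (x, k)" "x \<in> cbox a c"
        using tagged_division_ofD(2,3)[OF D(1)] by (cases p) blast
      then show "(\<lambda>(x, k). Henstock_Kurzweil_Integration.content k *\<^sub>R f x) p \<in> S" using f(2) S(2) by (simp add: subspace_scale)
    qed
    then show ?thesis using g(2) D by (auto simp: dist_norm)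
  qed
  then show ?thesis using S(1) closed_approachable by blast
qed

definition cutoff :: "real \<Rightarrow> real \<Rightarrow> real" where
  "cutoff r s = max (- r) (min r s)"

lemma cutoff_props:
  "0 \<le> r \<Longrightarrow> \<bar>cutoff r s\<bar> \<le> r" "0 \<le> r \<Longrightarrow> \<bar>cutoff r s\<bar> \<le> \<bar>s\<bar>" "\<bar>cutoff r s - cutoff r s'\<bar> \<le> \<bar>s - s'\<bar>"
  "\<bar>s\<bar> \<le> r \<Longrightarrow> cutoff r s = s"
  unfolding cutoff_def by auto

text \<open>The reaction term \<open>(1 + w) v\<^sup>2\<close>, with \<open>w = u - 1\<close>, cut off outside \<open>[-1, 1]\<^sup>2\<close> so that it is
  globally Lipschitz.\<close>
definition trunc_reaction :: "real \<Rightarrow> real \<Rightarrow> real" where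
  "trunc_reaction w v = (1 + cutoff 1 w) * (cutoff 1 v)\<^sup>2"

lemma abs_trunc_reaction_le:
  "\<bar>trunc_reaction w v\<bar> \<le> 2 * \<bar>v\<bar>" "\<bar>trunc_reaction w v\<bar> \<le> (1 + \<bar>w\<bar>) * v\<^sup>2"
proof -
  have w: "\<bar>1 + cutoff 1 w\<bar> \<le> 2" "\<bar>1 + cutoff 1 w\<bar> \<le> 1 + \<bar>w\<bar>" using cutoff_props(1,2)[of 1 w] by linarith+
  have "(cutoff 1 v)\<^sup>2 = \<bar>cutoff 1 v\<bar> * \<bar>cutoff 1 v\<bar>" by (simp add: power2_eq_square)
  also have "\<dots> \<le> 1 * \<bar>v\<bar>" using cutoff_props(1,2)[of 1 v] by (intro mult_mono) auto
  finally have v: "(cutoff 1 v)\<^sup>2 \<le> \<bar>v\<bar>" "(cutoff 1 v)\<^sup>2 \<le> v\<^sup>2"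
    using power_mono[OF cutoff_props(2)[of 1 v] abs_ge_zero, of 2] by simp_all
  have "\<bar>trunc_reaction w v\<bar> = \<bar>1 + cutoff 1 w\<bar> * (cutoff 1 v)\<^sup>2"
    unfolding trunc_reaction_def by (simp add: abs_mult)
  then show "\<bar>trunc_reaction w v\<bar> \<le> 2 * \<bar>v\<bar>" "\<bar>trunc_reaction w v\<bar> \<le> (1 + \<bar>w\<bar>) * v\<^sup>2"
    using w v by (auto intro!: mult_mono)
qed

lemma trunc_reaction_lipschitz:
  "\<bar>trunc_reaction w1 v1 - trunc_reaction w2 v2\<bar> \<le> \<bar>w1 - w2\<bar> + 4 * \<bar>v1 - v2\<bar>"
proof -
  define A where "A = (cutoff 1 w1 - cutoff 1 w2) * (cutoff 1 v1)\<^sup>2"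
  define B where "B = (1 + cutoff 1 w2) * ((cutoff 1 v1 - cutoff 1 v2) * (cutoff 1 v1 + cutoff 1 v2))"
  have eq: "trunc_reaction w1 v1 - trunc_reaction w2 v2 = A + B"
    unfolding trunc_reaction_def A_def B_def by (simp add: algebra_simps power2_eq_square)
  have "\<bar>A\<bar> \<le> \<bar>w1 - w2\<bar> * 1"
    unfolding A_def abs_mult using cutoff_props(3)[of 1 w1 w2] power_mono[OF cutoff_props(1)[of 1 v1], of 2]
    by (intro mult_mono) auto
  moreover have "\<bar>B\<bar> \<le> 2 * (\<bar>v1 - v2\<bar> * 2)"
    using cutoff_props(1)[of 1 w2] cutoff_props(1)[of 1 v1] cutoff_props(1)[of 1 v2] cutoff_props(3)[of 1 v1 v2]
    unfolding B_def abs_mult by (intro mult_mono) (auto simp: abs_le_iff)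
  ultimately show ?thesis unfolding eq by (intro order_trans[OF abs_triangle_ineq] add_mono) simp_all
qed

lemma abs_trunc_reaction_components_diff_le:
  "\<bar>trunc_reaction (component z1 x True) (component z1 x False)
    - trunc_reaction (component z2 x True) (component z2 x False)\<bar> \<le> 5 * norm (z1 - z2)"
proof -
  have "\<bar>component z1 x True - component z2 x True\<bar> + 4 * \<bar>component z1 x False - component z2 x False\<bar>
      \<le> norm (z1 - z2) + 4 * norm (z1 - z2)"
    by (intro add_mono mult_left_mono abs_component_diff_le) simp
  from order_trans[OF trunc_reaction_lipschitz this] show ?thesis by simp
qed

lemma trunc_reaction_measurable: "(\<lambda>p. trunc_reaction (fst p) (snd p)) \<in> borel_measurable borel"
  unfolding trunc_reaction_def cutoff_def by (intro borel_measurable_continuous_onI continuous_intros)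

context gray_scott
begin

definition truncated_rhs :: "'a state \<Rightarrow> 'a \<Rightarrow> bool \<Rightarrow> real" where
  "truncated_rhs z x b = (if b
     then d1 * k1.Gam_reg (\<lambda>y. component z y True) x - f * component z x True
       - trunc_reaction (component z x True) (component z x False)
     else d2 * k2.Gam_reg (\<lambda>y. component z y False) x - (f + \<kappa>) * component z x False
       + trunc_reaction (component z x True) (component z x False))"

definition truncated_field :: "'a state \<Rightarrow> 'a state" where
  "truncated_field z = state_of (truncated_rhs z)"

definition lipschitz_const :: real where
  "lipschitz_const = 2 * gi * (d1 + d2) + f + \<kappa> + 5"

lemma lipschitz_const_pos: "0 < lipschitz_const"
proof -
  have "0 \<le> 2 * gi * (d1 + d2)" using k1.mass_bound_nonneg d1_pos d2_pos by simp
  then show ?thesis unfolding lipschitz_const_def using f_pos \<kappa>_pos by linarith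
qed

lemma abs_truncated_rhs_le: "\<bar>truncated_rhs z x b\<bar> \<le> lipschitz_const * norm z"
proof -
  have G: "\<bar>k1.Gam_reg (\<lambda>y. component z y True) x\<bar> \<le> 2 * gi * norm z"
    "\<bar>k2.Gam_reg (\<lambda>y. component z y False) x\<bar> \<le> 2 * gi * norm z"
    by (auto intro: k1.abs_Gam_reg_le k2.abs_Gam_reg_le abs_component_le_norm)
  have N: "\<bar>trunc_reaction (component z x True) (component z x False)\<bar> \<le> 2 * norm z"
    using abs_trunc_reaction_le(1) abs_component_le_norm[of z x False] by (meson mult_left_mono order_trans zero_le_numeral)
  have w: "\<bar>component z x c\<bar> \<le> norm z" for c by (rule abs_component_le_norm)
  have "\<bar>truncated_rhs z x b\<bar> \<le> (if b then d1 else d2) * (2 * gi * norm z) + (f + \<kappa>) * norm z + 2 * norm z"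
  proof (cases b)
    case True
    have "\<bar>truncated_rhs z x b\<bar> \<le> d1 * \<bar>k1.Gam_reg (\<lambda>y. component z y True) x\<bar>
        + f * \<bar>component z x True\<bar> + \<bar>trunc_reaction (component z x True) (component z x False)\<bar>"
      using True abs_scaled_sum_le(2)[of d1 f] d1_pos f_pos unfolding truncated_rhs_def by simp
    also have "\<dots> \<le> d1 * (2 * gi * norm z) + (f + \<kappa>) * norm z + 2 * norm z"
      using G N w[of True] d1_pos f_pos \<kappa>_pos by (intro add_mono mult_left_mono mult_mono) auto
    finally show ?thesis using True by simp
  next
    case False
    have "\<bar>truncated_rhs z x b\<bar> \<le> d2 * \<bar>k2.Gam_reg (\<lambda>y. component z y False) x\<bar>
        + (f + \<kappa>) * \<bar>component z x False\<bar> + \<bar>trunc_reaction (component z x True) (component z x False)\<bar>"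
      using False abs_scaled_sum_le(1)[of d2 "f + \<kappa>"] d2_pos f_pos \<kappa>_pos unfolding truncated_rhs_def by simp
    also have "\<dots> \<le> d2 * (2 * gi * norm z) + (f + \<kappa>) * norm z + 2 * norm z"
      using G N w[of False] d2_pos f_pos \<kappa>_pos by (intro add_mono mult_left_mono) auto
    finally show ?thesis using False by simp
  qed
  also have "\<dots> \<le> lipschitz_const * norm z"
    unfolding lipschitz_const_def using k1.mass_bound_nonneg d1_pos d2_pos
    by (simp add: algebra_simps)
  finally show ?thesis .
qed

lemma component_truncated_field: "component (truncated_field z) x b = truncated_rhs z x b"
  unfolding truncated_field_def by (rule component_state_of[OF abs_truncated_rhs_le])

lemma norm_truncated_field_le: "norm (truncated_field z) \<le> lipschitz_const * norm z"
  by (rule norm_le_of_components) (simp add: component_truncated_field abs_truncated_rhs_le)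

lemma truncated_field_lipschitz:
  assumes z: "z1 \<in> measurable_states \<Omega>" "z2 \<in> measurable_states \<Omega>"
  shows "norm (truncated_field z1 - truncated_field z2) \<le> lipschitz_const * norm (z1 - z2)"
proof (rule norm_le_of_components)
  fix x b
  let ?n = "norm (z1 - z2)"
  note diff = abs_component_diff_le[of z1 x _ z2]
  note G = k1.abs_Gam_reg_components_diff_le[OF z, of True x] k2.abs_Gam_reg_components_diff_le[OF z, of False x]
  note N = abs_trunc_reaction_components_diff_le[of z1 x z2]
  let ?dG1 = "k1.Gam_reg (\<lambda>y. component z1 y True) x - k1.Gam_reg (\<lambda>y. component z2 y True) x"
  let ?dG2 = "k2.Gam_reg (\<lambda>y. component z1 y False) x - k2.Gam_reg (\<lambda>y. component z2 y False) x"
  let ?dN = "trunc_reaction (component z1 x True) (component z1 x False)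
    - trunc_reaction (component z2 x True) (component z2 x False)"
  have w: "f * \<bar>component z1 x c - component z2 x c\<bar> \<le> (f + \<kappa>) * ?n" for c
    using diff[of c] f_pos \<kappa>_pos by (intro mult_mono) auto
  have "\<bar>truncated_rhs z1 x b - truncated_rhs z2 x b\<bar>
      \<le> (if b then d1 else d2) * (2 * gi * ?n) + (f + \<kappa>) * ?n + 5 * ?n"
  proof (cases b)
    case True
    then have "truncated_rhs z1 x b - truncated_rhs z2 x b
        = d1 * ?dG1 - f * (component z1 x True - component z2 x True) - ?dN"
      unfolding truncated_rhs_def by (simp add: algebra_simps)
    then have "\<bar>truncated_rhs z1 x b - truncated_rhs z2 x b\<bar>
        \<le> d1 * \<bar>?dG1\<bar> + f * \<bar>component z1 x True - component z2 x True\<bar> + \<bar>?dN\<bar>"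
      using abs_scaled_sum_le(2)[of d1 f] d1_pos f_pos by simp
    moreover have "d1 * \<bar>?dG1\<bar> \<le> d1 * (2 * gi * ?n)" using G(1) d1_pos by simp
    ultimately show ?thesis using True w[of True] N by simp
  next
    case False
    then have "truncated_rhs z1 x b - truncated_rhs z2 x b
        = d2 * ?dG2 - (f + \<kappa>) * (component z1 x False - component z2 x False) + ?dN"
      unfolding truncated_rhs_def by (simp add: algebra_simps)
    then have "\<bar>truncated_rhs z1 x b - truncated_rhs z2 x b\<bar>
        \<le> d2 * \<bar>?dG2\<bar> + (f + \<kappa>) * \<bar>component z1 x False - component z2 x False\<bar> + \<bar>?dN\<bar>"
      using abs_scaled_sum_le(1)[of d2 "f + \<kappa>"] d2_pos f_pos \<kappa>_pos by simp
    moreover have "d2 * \<bar>?dG2\<bar> \<le> d2 * (2 * gi * ?n)" using G(2) d2_pos by simp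
    moreover have "(f + \<kappa>) * \<bar>component z1 x False - component z2 x False\<bar> \<le> (f + \<kappa>) * ?n"
      using diff[of False] f_pos \<kappa>_pos by simp
    ultimately show ?thesis using False N by simp
  qed
  also have "\<dots> \<le> lipschitz_const * ?n"
    unfolding lipschitz_const_def using k1.mass_bound_nonneg d1_pos d2_pos
    by (simp add: algebra_simps)
  finally show "\<bar>component (truncated_field z1 - truncated_field z2) x b\<bar> \<le> lipschitz_const * ?n"
    by (simp add: component_truncated_field)
qed

lemma truncated_field_measurable:
  assumes z: "z \<in> measurable_states \<Omega>"
  shows "truncated_field z \<in> measurable_states \<Omega>"
proof -
  have meas [measurable]: "(\<lambda>y. component z y c) \<in> borel_measurable (lebesgue_on \<Omega>)" for c
    using z unfolding measurable_states_def by auto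
  have [measurable]: "k1.Gam_reg (\<lambda>y. component z y True) \<in> borel_measurable (lebesgue_on \<Omega>)"
    "k2.Gam_reg (\<lambda>y. component z y False) \<in> borel_measurable (lebesgue_on \<Omega>)"
    by (simp_all add: k1.Gam_reg_measurable k2.Gam_reg_measurable)
  have [measurable]: "(\<lambda>x. trunc_reaction (component z x True) (component z x False))
      \<in> borel_measurable (lebesgue_on \<Omega>)"
    using measurable_compose[OF measurable_Pair[OF meas meas] trunc_reaction_measurable[unfolded borel_prod[symmetric]]]
    by simp
  show ?thesis unfolding measurable_states_def mem_Collect_eq
  proof
    fix b
    show "(\<lambda>x. component (truncated_field z) x b) \<in> borel_measurable (lebesgue_on \<Omega>)"
      unfolding component_truncated_field truncated_rhs_def by (cases b) simp_all
  qed
qed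

end

lemma at_within_Ici_eq: "(0::real) \<le> \<tau> \<Longrightarrow> at \<tau> within {0..} = at \<tau> within {0..\<tau> + 1}"
  by (rule at_within_nhd[where S="{\<tau> - 1 <..< \<tau> + 1}"]) auto

lemma norm_integral_exp_bound:
  fixes g :: "real \<Rightarrow> 'b::banach"
  assumes g: "continuous_on {0..\<tau>} g" and \<tau>: "0 \<le> \<tau>" and a: "0 < a"
    and bound: "\<And>s. s \<in> {0..\<tau>} \<Longrightarrow> norm (g s) \<le> K * exp (a * s)"
  shows "norm (integral {0..\<tau>} g) \<le> K * (exp (a * \<tau>) - 1) / a"
proof -
  have "((\<lambda>s. K * exp (a * s)) has_integral (K * exp (a * \<tau>) / a - K * exp (a * 0) / a)) {0..\<tau>}"
  proof (rule fundamental_theorem_of_calculus[OF \<tau>])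
    fix s assume "s \<in> {0..\<tau>}"
    have "((\<lambda>s. K * exp (a * s) / a) has_real_derivative K * exp (a * s)) (at s within {0..\<tau>})"
      using a by (auto intro!: derivative_eq_intros)
    then show "((\<lambda>s. K * exp (a * s) / a) has_vector_derivative K * exp (a * s)) (at s within {0..\<tau>})"
      by (simp add: has_real_derivative_iff_has_vector_derivative)
  qed
  then have "norm (integral {0..\<tau>} g) \<le> K * exp (a * \<tau>) / a - K * exp (a * 0) / a"
    using integral_norm_bound_integral[OF integrable_continuous_interval[OF g] has_integral_integrable bound]
      integral_unique by metis
  also have "\<dots> = K * (exp (a * \<tau>) - 1) / a" using a by (simp add: field_simps)
  finally show ?thesis .
qed

lemma continuous_on_integral_from_0:
  fixes g :: "real \<Rightarrow> 'b::banach"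
  assumes "continuous_on UNIV g"
  shows "continuous_on {0..} (\<lambda>\<tau>. integral {0..\<tau>} g)"
  unfolding continuous_on_eq_continuous_within
proof
  fix \<tau> :: real assume "\<tau> \<in> {0..}"
  have "continuous_on {0..\<tau> + 1} (\<lambda>\<tau>. integral {0..\<tau>} g)"
    by (rule indefinite_integral_continuous_1[OF integrable_continuous_interval])
      (rule continuous_on_subset[OF assms], simp)
  then show "continuous (at \<tau> within {0..}) (\<lambda>\<tau>. integral {0..\<tau>} g)"
    using \<open>\<tau> \<in> {0..}\<close> at_within_Ici_eq[of \<tau>] unfolding continuous_on_eq_continuous_within by auto
qed

lemma tendsto_norm_difference_quotient:
  fixes Y :: "real \<Rightarrow> 'b::real_normed_vector"
  assumes "(Y has_vector_derivative F) (at t within S)"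
  shows "((\<lambda>s. norm ((Y s - Y t) /\<^sub>R (s - t) - F)) \<longlongrightarrow> 0) (at t within S)"
proof -
  have "((\<lambda>s. (1 / norm (s - t)) *\<^sub>R (Y s - (Y t + (s - t) *\<^sub>R F))) \<longlongrightarrow> 0) (at t within S)"
    using assms unfolding has_vector_derivative_def has_derivative_within by simp
  then have lim: "((\<lambda>s. norm ((1 / norm (s - t)) *\<^sub>R (Y s - (Y t + (s - t) *\<^sub>R F)))) \<longlongrightarrow> 0)
      (at t within S)"
    by (rule tendsto_norm_zero)
  have eq: "norm ((1 / norm (s - t)) *\<^sub>R (Y s - (Y t + (s - t) *\<^sub>R F)))
      = norm ((Y s - Y t) /\<^sub>R (s - t) - F)" if "s \<noteq> t" for s
  proof -
    have "(1 / (s - t)) *\<^sub>R (Y s - (Y t + (s - t) *\<^sub>R F))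
        = (1 / (s - t)) *\<^sub>R (Y s - Y t) - (1 / (s - t)) *\<^sub>R ((s - t) *\<^sub>R F)"
      by (simp add: algebra_simps)
    also have "\<dots> = (Y s - Y t) /\<^sub>R (s - t) - F" using that by (simp add: divide_inverse)
    finally have "norm ((Y s - Y t) /\<^sub>R (s - t) - F) = norm ((1 / (s - t)) *\<^sub>R (Y s - (Y t + (s - t) *\<^sub>R F)))"
      by simp
    then show ?thesis by simp
  qed
  have "eventually (\<lambda>s. norm ((1 / norm (s - t)) *\<^sub>R (Y s - (Y t + (s - t) *\<^sub>R F)))
      = norm ((Y s - Y t) /\<^sub>R (s - t) - F)) (at t within S)"
    unfolding eventually_at_filter by (intro always_eventually allI impI eq)
  then show ?thesis by (rule Lim_transform_eventually[OF lim])
qed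

context gray_scott
begin

lemma truncated_field_continuous: "continuous_on (measurable_states \<Omega>) truncated_field"
proof (rule lipschitz_on_continuous_on)
  show "lipschitz_const-lipschitz_on (measurable_states \<Omega>) truncated_field"
    by (rule lipschitz_onI) (simp_all add: dist_norm truncated_field_lipschitz lipschitz_const_pos less_imp_le)
qed

text \<open>Picard iteration for \<open>Y t = exp (weight * t) *\<^sub>R V t\<close> in the sup norm of \<open>V\<close>, i.e. in Bielecki's
  weighted norm for \<open>Y\<close>: with \<open>weight = 2 * lipschitz_const\<close> the integral map is a \<open>1/2\<close>-contraction
  on the whole half line.\<close>
definition weight :: real where
  "weight = 2 * lipschitz_const"

definition paths :: "(real \<Rightarrow>\<^sub>C 'a state) set" where
  "paths = PiC UNIV (\<lambda>_. measurable_states \<Omega>)"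

definition picard_integrand :: "(real \<Rightarrow>\<^sub>C 'a state) \<Rightarrow> real \<Rightarrow> 'a state" where
  "picard_integrand V s = truncated_field (exp (weight * s) *\<^sub>R apply_bcontfun V s)"

definition picard_map :: "'a state \<Rightarrow> (real \<Rightarrow>\<^sub>C 'a state) \<Rightarrow> real \<Rightarrow> 'a state" where
  "picard_map X0 V t = exp (- weight * max 0 t) *\<^sub>R (X0 + integral {0..max 0 t} (picard_integrand V))"

lemma weight_pos: "0 < weight"
  unfolding weight_def using lipschitz_const_pos by simp

lemma mem_paths: "V \<in> paths \<longleftrightarrow> (\<forall>s. apply_bcontfun V s \<in> measurable_states \<Omega>)"
  unfolding paths_def mem_PiC_iff by auto

lemma weighted_path_measurable:
  "V \<in> paths \<Longrightarrow> exp (weight * s) *\<^sub>R apply_bcontfun V s \<in> measurable_states \<Omega>"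
  by (simp add: mem_paths subspace_scale[OF subspace_measurable_states])

lemma picard_integrand_continuous:
  assumes "V \<in> paths"
  shows "continuous_on A (picard_integrand V)"
  unfolding picard_integrand_def
proof (rule continuous_on_subset[OF continuous_on_compose2[OF truncated_field_continuous]])
  show "continuous_on UNIV (\<lambda>s. exp (weight * s) *\<^sub>R apply_bcontfun V s)"
    by (intro continuous_intros) simp
qed (auto intro: weighted_path_measurable[OF assms])

lemma picard_integrand_measurable: "V \<in> paths \<Longrightarrow> picard_integrand V s \<in> measurable_states \<Omega>"
  unfolding picard_integrand_def by (intro truncated_field_measurable weighted_path_measurable)

lemma norm_picard_integrand_le:
  "norm (picard_integrand V s) \<le> lipschitz_const * norm V * exp (weight * s)"
proof -
  have "norm (picard_integrand V s) \<le> lipschitz_const * (exp (weight * s) * norm (apply_bcontfun V s))"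
    unfolding picard_integrand_def
    using norm_truncated_field_le[of "exp (weight * s) *\<^sub>R apply_bcontfun V s"] by simp
  also have "\<dots> \<le> lipschitz_const * (exp (weight * s) * norm V)"
    using lipschitz_const_pos norm_bounded[of V s] by (intro mult_left_mono) auto
  finally show ?thesis by (simp add: algebra_simps)
qed

lemma norm_picard_integrand_diff_le:
  assumes "V1 \<in> paths" "V2 \<in> paths"
  shows "norm (picard_integrand V1 s - picard_integrand V2 s) \<le> lipschitz_const * norm (V1 - V2) * exp (weight * s)"
proof -
  have "norm (picard_integrand V1 s - picard_integrand V2 s)
      \<le> lipschitz_const * norm (exp (weight * s) *\<^sub>R apply_bcontfun V1 s - exp (weight * s) *\<^sub>R apply_bcontfun V2 s)"
    unfolding picard_integrand_def by (intro truncated_field_lipschitz weighted_path_measurable assms)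
  also have "\<dots> \<le> lipschitz_const * (exp (weight * s) * norm (V1 - V2))"
    using lipschitz_const_pos norm_bounded[of "V1 - V2" s]
    by (intro mult_left_mono) (auto simp flip: scaleR_diff_right)
  finally show ?thesis by (simp add: algebra_simps)
qed

lemma norm_weighted_integral_le:
  fixes g :: "real \<Rightarrow> 'a state"
  assumes g: "continuous_on {0..\<tau>} g" and \<tau>: "0 \<le> \<tau>" and M: "0 \<le> M"
    and bound: "\<And>s. s \<in> {0..\<tau>} \<Longrightarrow> norm (g s) \<le> lipschitz_const * M * exp (weight * s)"
  shows "norm (exp (- weight * \<tau>) *\<^sub>R integral {0..\<tau>} g) \<le> M / 2"
proof -
  have "norm (exp (- weight * \<tau>) *\<^sub>R integral {0..\<tau>} g)
      \<le> exp (- weight * \<tau>) * (lipschitz_const * M * (exp (weight * \<tau>) - 1) / weight)"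
    using mult_left_mono[OF norm_integral_exp_bound[OF g \<tau> weight_pos bound], of "exp (- weight * \<tau>)"]
    by simp
  also have "\<dots> = M / 2 * (1 - exp (- weight * \<tau>))"
    unfolding weight_def using lipschitz_const_pos by (simp add: field_simps flip: exp_add)
  also have "\<dots> \<le> M / 2" using M by (simp add: mult_left_le)
  finally show ?thesis .
qed

lemma norm_picard_map_le:
  assumes "V \<in> paths"
  shows "norm (picard_map X0 V t) \<le> norm X0 + norm V / 2"
proof -
  define \<tau> where "\<tau> = max 0 t"
  have \<tau>: "0 \<le> \<tau>" unfolding \<tau>_def by simp
  have "norm (picard_map X0 V t)
      \<le> norm (exp (- weight * \<tau>) *\<^sub>R X0) + norm (exp (- weight * \<tau>) *\<^sub>R integral {0..\<tau>} (picard_integrand V))"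
    unfolding picard_map_def \<tau>_def[symmetric] scaleR_add_right by (rule norm_triangle_ineq)
  also have "\<dots> \<le> norm X0 + norm V / 2"
    using weight_pos \<tau> picard_integrand_continuous[OF assms] norm_picard_integrand_le
    by (intro add_mono norm_weighted_integral_le) (auto simp: mult_left_le_one_le)
  finally show ?thesis .
qed

lemma norm_picard_map_diff_le:
  assumes "V1 \<in> paths" "V2 \<in> paths"
  shows "norm (picard_map X0 V1 t - picard_map X0 V2 t) \<le> norm (V1 - V2) / 2"
proof -
  define \<tau> where "\<tau> = max 0 t"
  have "picard_map X0 V1 t - picard_map X0 V2 t
      = exp (- weight * \<tau>) *\<^sub>R integral {0..\<tau>} (\<lambda>s. picard_integrand V1 s - picard_integrand V2 s)"
    unfolding picard_map_def \<tau>_def[symmetric] using picard_integrand_continuous assms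
    by (simp add: integral_diff integrable_continuous_interval algebra_simps)
  also have "norm \<dots> \<le> norm (V1 - V2) / 2"
    using picard_integrand_continuous assms norm_picard_integrand_diff_le
    by (intro norm_weighted_integral_le continuous_intros) (auto simp: \<tau>_def)
  finally show ?thesis .
qed

lemma picard_map_measurable:
  assumes "V \<in> paths" "X0 \<in> measurable_states \<Omega>"
  shows "picard_map X0 V t \<in> measurable_states \<Omega>"
proof -
  have "((picard_integrand V) has_integral integral {0..max 0 t} (picard_integrand V)) (cbox 0 (max 0 t))"
    using integrable_continuous_interval[OF picard_integrand_continuous[OF assms(1)]]
    by (simp add: integrable_integral)
  then have "integral {0..max 0 t} (picard_integrand V) \<in> measurable_states \<Omega>"
    by (rule integral_in_closed_subspace[OF closed_measurable_states subspace_measurable_states _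
          picard_integrand_measurable[OF assms(1)]])
  then show ?thesis unfolding picard_map_def
    by (intro subspace_scale[OF subspace_measurable_states] subspace_add[OF subspace_measurable_states] assms(2))
qed

lemma picard_map_bcontfun:
  assumes "V \<in> paths"
  shows "picard_map X0 V \<in> bcontfun"
proof (rule bcontfun_normI)
  have "continuous_on UNIV (\<lambda>t. integral {0..max 0 t} (picard_integrand V))"
    by (rule continuous_on_compose2[OF continuous_on_integral_from_0[OF picard_integrand_continuous[OF assms]]])
      (auto intro!: continuous_on_max continuous_on_const continuous_on_id)
  then show "continuous_on UNIV (picard_map X0 V)" unfolding picard_map_def by (intro continuous_intros)
qed (rule norm_picard_map_le[OF assms])

lemma picard_fixpoint:
  assumes X0: "X0 \<in> measurable_states \<Omega>"
  obtains V where "V \<in> paths" "apply_bcontfun V = picard_map X0 V"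
proof -
  define Q where "Q V = Bcontfun (picard_map X0 V)" for V
  have Q: "apply_bcontfun (Q V) = picard_map X0 V" if "V \<in> paths" for V
    unfolding Q_def using picard_map_bcontfun[OF that] by (simp add: Bcontfun_inverse)
  have "\<exists>!V\<in>paths. Q V = V"
  proof (rule Banach_fix[where c="1/2"])
    show "complete paths" unfolding paths_def complete_eq_closed
      by (rule closed_PiC) (rule closed_measurable_states)
    have "0 \<in> paths" by (simp add: mem_paths subspace_0[OF subspace_measurable_states])
    then show "paths \<noteq> {}" by blast
    show "Q ` paths \<subseteq> paths" using Q picard_map_measurable[OF _ X0] by (auto simp: mem_paths)
    show "dist (Q V1) (Q V2) \<le> 1/2 * dist V1 V2" if "V1 \<in> paths" "V2 \<in> paths" for V1 V2
      by (rule dist_bound) (use norm_picard_map_diff_le[OF that] Q[OF that(1)] Q[OF that(2)] in \<open>simp add: dist_norm\<close>)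
  qed simp_all
  then obtain V where V: "V \<in> paths" "Q V = V" by blast
  then show thesis using that Q by metis
qed

lemma truncated_flow_exists:
  assumes X0: "X0 \<in> measurable_states \<Omega>"
  obtains Y where "Y 0 = X0" "\<And>t. Y t \<in> measurable_states \<Omega>"
    "\<And>t. 0 \<le> t \<Longrightarrow> (Y has_vector_derivative truncated_field (Y t)) (at t within {0..})"
proof -
  obtain V where V: "V \<in> paths" "apply_bcontfun V = picard_map X0 V"
    by (rule picard_fixpoint[OF X0])
  define Y where "Y t = exp (weight * t) *\<^sub>R apply_bcontfun V t" for t
  have integrand: "picard_integrand V s = truncated_field (Y s)" for s
    unfolding picard_integrand_def Y_def ..
  have Y_eq: "Y t = X0 + integral {0..t} (\<lambda>s. truncated_field (Y s))" if "0 \<le> t" for t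
  proof -
    have "Y t = exp (weight * t) *\<^sub>R picard_map X0 V t" unfolding Y_def by (simp only: V(2))
    also have "\<dots> = X0 + integral {0..t} (\<lambda>s. truncated_field (Y s))"
      using that unfolding picard_map_def integrand by (simp flip: exp_add)
    finally show ?thesis .
  qed
  have deriv: "(Y has_vector_derivative truncated_field (Y t)) (at t within {0..})" if t: "0 \<le> t" for t
  proof -
    have "continuous_on {0..t + 1} (\<lambda>s. truncated_field (Y s))"
      using picard_integrand_continuous[OF V(1)] unfolding integrand .
    then have "((\<lambda>u. integral {0..u} (\<lambda>s. truncated_field (Y s))) has_vector_derivative truncated_field (Y t))
        (at t within {0..t + 1})"
      by (rule integral_has_vector_derivative) (use t in simp)
    then have "((\<lambda>u. X0 + integral {0..u} (\<lambda>s. truncated_field (Y s))) has_vector_derivative truncated_field (Y t))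
        (at t within {0..t + 1})"
      by (intro derivative_eq_intros) auto
    then show ?thesis unfolding at_within_Ici_eq[OF t, symmetric]
      by (rule has_vector_derivative_transform[rotated 2]) (use t Y_eq in auto)
  qed
  have "Y t \<in> measurable_states \<Omega>" for t
    unfolding Y_def by (rule weighted_path_measurable[OF V(1)])
  moreover have "Y 0 = X0" using Y_eq[of 0] by simp
  ultimately show thesis using deriv that by blast
qed

end

lemma (in open_domain) linf_quotient_tendsto_zero:
  assumes deriv: "(Y has_vector_derivative F) (at t within J)"
    and Y: "\<And>s. Y s \<in> measurable_states \<Omega>" and F: "F \<in> measurable_states \<Omega>"
    and eq: "\<And>s. AE x in lebesgue_on \<Omega>. h s x = component ((Y s - Y t) /\<^sub>R (s - t) - F) x b"
  shows "((\<lambda>s. linf \<Omega> (h s)) \<longlongrightarrow> 0) (at t within J)"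
proof (rule linf_tendsto_zero[OF tendsto_norm_difference_quotient[OF deriv]])
  fix s
  have "(Y s - Y t) /\<^sub>R (s - t) - F \<in> measurable_states \<Omega>"
    by (intro subspace_diff[OF subspace_measurable_states] subspace_scale[OF subspace_measurable_states] Y F)
  then have "(\<lambda>x. component ((Y s - Y t) /\<^sub>R (s - t) - F) x b) \<in> borel_measurable (lebesgue_on \<Omega>)"
    unfolding measurable_states_def by blast
  then have "h s \<in> borel_measurable (lebesgue_on \<Omega>)"
    by (rule borel_measurable_lebesgue_on_AE_cong[OF domain_sets_lebesgue])
      (use eq[of s] in \<open>auto elim: eventually_mono\<close>)
  then show "linf \<Omega> (h s) \<le> ereal (norm ((Y s - Y t) /\<^sub>R (s - t) - F))"
    by (rule linf_le) (use eq[of s] in \<open>eventually_elim, simp only: abs_component_le_norm\<close>)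
qed

context gray_scott
begin

lemma AE_component_truncated_field:
  assumes z: "z \<in> measurable_states \<Omega>"
  shows "AE x in lebesgue_on \<Omega>.
    component (truncated_field z) x True = d1 * Gam \<Omega> \<gamma>1 (\<lambda>y. component z y True) x
      - f * component z x True - trunc_reaction (component z x True) (component z x False) \<and>
    component (truncated_field z) x False = d2 * Gam \<Omega> \<gamma>2 (\<lambda>y. component z y False) x
      - (f + \<kappa>) * component z x False + trunc_reaction (component z x True) (component z x False)"
  using k1.AE_Gam_reg_eq[of "\<lambda>y. component z y True"] k2.AE_Gam_reg_eq[of "\<lambda>y. component z y False"] z
  unfolding measurable_states_def
  by (auto simp: component_truncated_field truncated_rhs_def elim!: eventually_elim2)

lemma truncated_flow_is_perturbation:
  assumes Y: "\<And>t. Y t \<in> measurable_states \<Omega>"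
    and deriv: "\<And>t. 0 \<le> t \<Longrightarrow> (Y has_vector_derivative truncated_field (Y t)) (at t within {0..})"
  shows "perturbation \<Omega> \<gamma>1 \<gamma>2 gi d1 d2 f \<kappa> {0..}
    (\<lambda>t x. component (Y t) x True) (\<lambda>t x. component (Y t) x False)
    (\<lambda>t x. - trunc_reaction (component (Y t) x True) (component (Y t) x False))
    (\<lambda>t x. trunc_reaction (component (Y t) x True) (component (Y t) x False))"
proof unfold_locales
  have "inX \<Omega> (\<lambda>x. component (Y t) x b)" for t b
    using Y unfolding measurable_states_def by (intro inX_I[where c="norm (Y t)"] AE_I2 abs_component_le_norm) auto
  then show "inX \<Omega> (\<lambda>x. component (Y t) x True)" "inX \<Omega> (\<lambda>x. component (Y t) x False)" for t
    by auto
  show "((\<lambda>s. linf \<Omega> (\<lambda>x. (component (Y s) x True - component (Y t) x True) / (s - t)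
      - (d1 * Gam \<Omega> \<gamma>1 (\<lambda>x. component (Y t) x True) x - f * component (Y t) x True
        + - trunc_reaction (component (Y t) x True) (component (Y t) x False)))) \<longlongrightarrow> 0) (at t within {0..})"
    if "t \<in> {0..}" for t
    using that Y truncated_field_measurable[OF Y] AE_component_truncated_field[OF Y]
    by (intro linf_quotient_tendsto_zero[OF deriv, where b=True])
      (auto elim!: eventually_mono simp: divide_inverse algebra_simps)
  show "((\<lambda>s. linf \<Omega> (\<lambda>x. (component (Y s) x False - component (Y t) x False) / (s - t)
      - (d2 * Gam \<Omega> \<gamma>2 (\<lambda>x. component (Y t) x False) x - (f + \<kappa>) * component (Y t) x False
        + trunc_reaction (component (Y t) x True) (component (Y t) x False)))) \<longlongrightarrow> 0) (at t within {0..})"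
    if "t \<in> {0..}" for t
    using that Y truncated_field_measurable[OF Y] AE_component_truncated_field[OF Y]
    by (intro linf_quotient_tendsto_zero[OF deriv, where b=False])
      (auto elim!: eventually_mono simp: divide_inverse algebra_simps)
qed (auto simp: abs_trunc_reaction_le is_interval_1)

lemma truncated_flow_stays_small:
  assumes Y: "\<And>t. Y t \<in> measurable_states \<Omega>"
    and deriv: "\<And>t. 0 \<le> t \<Longrightarrow> (Y has_vector_derivative truncated_field (Y t)) (at t within {0..})"
    and small: "linf_norm \<Omega> (\<lambda>x. component (Y 0) x True) + linf_norm \<Omega> (\<lambda>x. component (Y 0) x False)
      < attraction_radius"
    and t: "0 \<le> t"
  shows "AE x in lebesgue_on \<Omega>. \<bar>component (Y t) x True\<bar> \<le> 1 \<and> \<bar>component (Y t) x False\<bar> \<le> 1"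
proof -
  interpret perturbation \<Omega> \<gamma>1 \<gamma>2 gi d1 d2 f \<kappa> "{0..}"
      "\<lambda>t x. component (Y t) x True" "\<lambda>t x. component (Y t) x False"
      "\<lambda>t x. - trunc_reaction (component (Y t) x True) (component (Y t) x False)"
      "\<lambda>t x. trunc_reaction (component (Y t) x True) (component (Y t) x False)"
    by (rule truncated_flow_is_perturbation[OF Y deriv])
  define C where "C = max (deviation 0) (attraction_radius / 2)"
  have C: "0 < C" "C < attraction_radius" "deviation 0 \<le> C"
    using small attraction_radius_pos unfolding C_def deviation_def by auto
  have "deviation t \<le> C * exp (- (f / 4) * t)" using deviation_decay[OF C] t by simp
  also have "\<dots> \<le> C" using C(1) f_pos t by (simp add: mult_left_le)
  finally have "deviation t < 1" using C(2) unfolding attraction_radius_def by linarith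
  moreover have tJ: "t \<in> {0..}" using t by simp
  ultimately have bounds: "linf_norm \<Omega> (\<lambda>x. component (Y t) x True) \<le> 1"
    "linf_norm \<Omega> (\<lambda>x. component (Y t) x False) \<le> 1"
    using inX_linf_norm(2)[OF W_in_X[OF tJ]] inX_linf_norm(2)[OF V_in_X[OF tJ]] unfolding deviation_def
    by linarith+
  from inX_linf_norm(3)[OF W_in_X[OF tJ]] inX_linf_norm(3)[OF V_in_X[OF tJ]] show ?thesis
    by eventually_elim (use bounds in auto)
qed

end

context gray_scott
begin

lemma initial_state_exists:
  assumes u0: "inX \<Omega> u0" and v0: "inX \<Omega> v0"
  obtains X0 where "X0 \<in> measurable_states \<Omega>"
    "AE x in lebesgue_on \<Omega>. component X0 x True = u0 x - 1 \<and> component X0 x False = v0 x"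
proof -
  define r1 where "r1 = linf_norm \<Omega> (\<lambda>x. u0 x - 1)"
  define r2 where "r2 = linf_norm \<Omega> v0"
  note u1 = inX_diff_const[OF u0, of 1]
  have r: "0 \<le> r1" "0 \<le> r2" unfolding r1_def r2_def using inX_linf_norm(2) u1 v0 by auto
  define g where "g x b = (if b then cutoff r1 (u0 x - 1) else cutoff r2 (v0 x))" for x b
  have "\<bar>g x b\<bar> \<le> r1 + r2" for x b
  proof -
    have "\<bar>cutoff r1 (u0 x - 1)\<bar> \<le> r1 + r2" "\<bar>cutoff r2 (v0 x)\<bar> \<le> r1 + r2"
      using cutoff_props(1)[OF r(1), of "u0 x - 1"] cutoff_props(1)[OF r(2), of "v0 x"] r by linarith+
    then show ?thesis unfolding g_def by simp
  qed
  then have X0: "component (state_of g) x b = g x b" for x b by (rule component_state_of)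
  have "state_of g \<in> measurable_states \<Omega>"
    unfolding measurable_states_def mem_Collect_eq X0
  proof
    fix b
    have [measurable]: "u0 \<in> borel_measurable (lebesgue_on \<Omega>)" "v0 \<in> borel_measurable (lebesgue_on \<Omega>)"
      using u0 v0 unfolding inX_def by auto
    show "(\<lambda>x. g x b) \<in> borel_measurable (lebesgue_on \<Omega>)"
      unfolding g_def cutoff_def by (cases b) simp_all
  qed
  moreover have "AE x in lebesgue_on \<Omega>. component (state_of g) x True = u0 x - 1
      \<and> component (state_of g) x False = v0 x"
    using inX_linf_norm(3)[OF u1] inX_linf_norm(3)[OF v0]
    by eventually_elim (simp add: X0 g_def cutoff_props(4) r1_def r2_def)
  ultimately show thesis by (rule that)
qed

text \<open>A flow of the truncated field that stays in the unit ball solves the original system. The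
  initial state is only an everywhere bounded representative of the initial data, so the null
  functions \<open>c1\<close> and \<open>c2\<close> are added to recover the initial data exactly.\<close>
context
  fixes Y :: "real \<Rightarrow> 'a state" and c1 c2 :: "'a \<Rightarrow> real"
  assumes flow_measurable: "\<And>t. Y t \<in> measurable_states \<Omega>"
    and flow_deriv: "\<And>t. 0 \<le> t \<Longrightarrow> (Y has_vector_derivative truncated_field (Y t)) (at t within {0..})"
    and flow_small: "\<And>t. 0 \<le> t \<Longrightarrow>
      AE x in lebesgue_on \<Omega>. \<bar>component (Y t) x True\<bar> \<le> 1 \<and> \<bar>component (Y t) x False\<bar> \<le> 1"
    and null_measurable: "c1 \<in> borel_measurable (lebesgue_on \<Omega>)" "c2 \<in> borel_measurable (lebesgue_on \<Omega>)"
    and null_AE: "AE x in lebesgue_on \<Omega>. c1 x = 0 \<and> c2 x = 0"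
begin

lemma flow_component_measurable: "(\<lambda>x. component (Y t) x b) \<in> borel_measurable (lebesgue_on \<Omega>)"
  using flow_measurable unfolding measurable_states_def by blast

lemma AE_flow_rhs_eq:
  assumes t: "0 \<le> t"
  defines "U \<equiv> \<lambda>x. component (Y t) x True + 1 + c1 x" and "V \<equiv> \<lambda>x. component (Y t) x False + c2 x"
  shows "AE x in lebesgue_on \<Omega>.
      d1 * Gam \<Omega> \<gamma>1 U x - U x * (V x)\<^sup>2 + f * (1 - U x) = component (truncated_field (Y t)) x True"
    and "AE x in lebesgue_on \<Omega>.
      d2 * Gam \<Omega> \<gamma>2 V x + U x * (V x)\<^sup>2 - (f + \<kappa>) * V x = component (truncated_field (Y t)) x False"
proof -
  have "AE x in lebesgue_on \<Omega>.
    d1 * Gam \<Omega> \<gamma>1 U x - U x * (V x)\<^sup>2 + f * (1 - U x) = component (truncated_field (Y t)) x True \<and>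
    d2 * Gam \<Omega> \<gamma>2 V x + U x * (V x)\<^sup>2 - (f + \<kappa>) * V x = component (truncated_field (Y t)) x False"
    using AE_component_truncated_field[OF flow_measurable[of t]] flow_small[OF t] null_AE
      k1.AE_regular_point k2.AE_regular_point
  proof eventually_elim
    case (elim x)
    have "Gam \<Omega> \<gamma>1 U x = Gam \<Omega> \<gamma>1 (\<lambda>y. component (Y t) y True + 1) x"
      using elim(3,4) null_AE flow_component_measurable null_measurable unfolding U_def k1.regular_points_def
      by (intro Gam_cong_AE) (auto elim: eventually_mono)
    moreover have "Gam \<Omega> \<gamma>2 V x = Gam \<Omega> \<gamma>2 (\<lambda>y. component (Y t) y False) x"
      using elim(3,5) null_AE flow_component_measurable null_measurable unfolding V_def k2.regular_points_def
      by (intro Gam_cong_AE) (auto elim: eventually_mono)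
    ultimately show ?case
      using elim(1-3) unfolding U_def V_def Gam_shift trunc_reaction_def
      by (simp add: cutoff_props(4) algebra_simps)
  qed
  then show "AE x in lebesgue_on \<Omega>.
      d1 * Gam \<Omega> \<gamma>1 U x - U x * (V x)\<^sup>2 + f * (1 - U x) = component (truncated_field (Y t)) x True"
    "AE x in lebesgue_on \<Omega>.
      d2 * Gam \<Omega> \<gamma>2 V x + U x * (V x)\<^sup>2 - (f + \<kappa>) * V x = component (truncated_field (Y t)) x False"
    by (auto elim: eventually_mono)
qed

lemma flow_solution:
  "is_sol \<Omega> d1 d2 f \<kappa> \<gamma>1 \<gamma>2 {0..}
    (\<lambda>t x. component (Y t) x True + 1 + c1 x) (\<lambda>t x. component (Y t) x False + c2 x)"
  unfolding is_sol_def
proof (intro conjI ballI)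
  fix t :: real assume "t \<in> {0..}"
  then have t: "0 \<le> t" by simp
  have "AE x in lebesgue_on \<Omega>. \<bar>component (Y t) x True + 1 + c1 x\<bar> \<le> norm (Y t) + 1
      \<and> \<bar>component (Y t) x False + c2 x\<bar> \<le> norm (Y t) + 1"
    using null_AE
  proof eventually_elim
    case (elim x)
    then show ?case using abs_component_le_norm[of "Y t" x True] abs_component_le_norm[of "Y t" x False]
      by auto
  qed
  moreover have "(\<lambda>x. component (Y t) x True + 1 + c1 x) \<in> borel_measurable (lebesgue_on \<Omega>)"
    "(\<lambda>x. component (Y t) x False + c2 x) \<in> borel_measurable (lebesgue_on \<Omega>)"
    using flow_component_measurable null_measurable by (auto intro!: borel_measurable_add)
  ultimately show "inX \<Omega> (\<lambda>x. component (Y t) x True + 1 + c1 x)" "inX \<Omega> (\<lambda>x. component (Y t) x False + c2 x)"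
    by (auto intro: inX_I elim: eventually_mono)
  show "((\<lambda>s. linf \<Omega> (\<lambda>x. (component (Y s) x True + 1 + c1 x - (component (Y t) x True + 1 + c1 x)) / (s - t)
      - (d1 * Gam \<Omega> \<gamma>1 (\<lambda>x. component (Y t) x True + 1 + c1 x) x
        - (component (Y t) x True + 1 + c1 x) * (component (Y t) x False + c2 x)\<^sup>2
        + f * (1 - (component (Y t) x True + 1 + c1 x))))) \<longlongrightarrow> 0) (at t within {0..})"
    by (rule linf_quotient_tendsto_zero[OF flow_deriv[OF t] flow_measurable
          truncated_field_measurable[OF flow_measurable], where b=True])
      (use AE_flow_rhs_eq(1)[OF t] in \<open>eventually_elim, simp only: component_simps, simp add: divide_inverse\<close>)
  show "((\<lambda>s. linf \<Omega> (\<lambda>x. (component (Y s) x False + c2 x - (component (Y t) x False + c2 x)) / (s - t)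
      - (d2 * Gam \<Omega> \<gamma>2 (\<lambda>x. component (Y t) x False + c2 x) x
        + (component (Y t) x True + 1 + c1 x) * (component (Y t) x False + c2 x)\<^sup>2
        - (f + \<kappa>) * (component (Y t) x False + c2 x)))) \<longlongrightarrow> 0) (at t within {0..})"
    by (rule linf_quotient_tendsto_zero[OF flow_deriv[OF t] flow_measurable
          truncated_field_measurable[OF flow_measurable], where b=False])
      (use AE_flow_rhs_eq(2)[OF t] in \<open>eventually_elim, simp only: component_simps, simp add: divide_inverse\<close>)
qed simp

end

lemma small_data_global_solution:
  assumes u0: "inX \<Omega> u0" and v0: "inX \<Omega> v0" and small: "dist10 \<Omega> u0 v0 < ereal attraction_radius"
  shows "\<exists>U V. is_sol \<Omega> d1 d2 f \<kappa> \<gamma>1 \<gamma>2 {0..} U V \<and> U 0 = u0 \<and> V 0 = v0"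
proof -
  obtain X0 where X0: "X0 \<in> measurable_states \<Omega>"
    and X0_eq: "AE x in lebesgue_on \<Omega>. component X0 x True = u0 x - 1 \<and> component X0 x False = v0 x"
    by (rule initial_state_exists[OF u0 v0])
  obtain Y where Y: "Y 0 = X0" "\<And>t. Y t \<in> measurable_states \<Omega>"
    "\<And>t. 0 \<le> t \<Longrightarrow> (Y has_vector_derivative truncated_field (Y t)) (at t within {0..})"
    by (rule truncated_flow_exists[OF X0]) blast
  have X0_inX: "inX \<Omega> (\<lambda>x. component X0 x b)" for b
    using X0 unfolding measurable_states_def by (intro inX_I[where c="norm X0"] AE_I2 abs_component_le_norm) auto
  have "linf_norm \<Omega> (\<lambda>x. component X0 x True) \<le> linf_norm \<Omega> (\<lambda>x. u0 x - 1)"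
    "linf_norm \<Omega> (\<lambda>x. component X0 x False) \<le> linf_norm \<Omega> v0"
    using X0_eq inX_linf_norm(3)[OF inX_diff_const[OF u0, of 1]] inX_linf_norm(3)[OF v0]
    by (auto intro!: linf_norm_le X0_inX elim!: eventually_elim2)
  then have "linf_norm \<Omega> (\<lambda>x. component (Y 0) x True) + linf_norm \<Omega> (\<lambda>x. component (Y 0) x False)
      < attraction_radius"
    using small dist10_eq_linf_norm[OF u0 v0] Y(1) by simp
  note flow_small = truncated_flow_stays_small[OF Y(2,3) this]
  define c1 where "c1 x = u0 x - 1 - component X0 x True" for x
  define c2 where "c2 x = v0 x - component X0 x False" for x
  have [measurable]: "u0 \<in> borel_measurable (lebesgue_on \<Omega>)" "v0 \<in> borel_measurable (lebesgue_on \<Omega>)"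
    "(\<lambda>x. component X0 x b) \<in> borel_measurable (lebesgue_on \<Omega>)" for b
    using u0 v0 X0_inX unfolding inX_def by auto
  have "c1 \<in> borel_measurable (lebesgue_on \<Omega>)" "c2 \<in> borel_measurable (lebesgue_on \<Omega>)"
    unfolding c1_def[abs_def] c2_def[abs_def] by measurable
  moreover have "AE x in lebesgue_on \<Omega>. c1 x = 0 \<and> c2 x = 0"
    using X0_eq by eventually_elim (simp add: c1_def c2_def)
  ultimately have "is_sol \<Omega> d1 d2 f \<kappa> \<gamma>1 \<gamma>2 {0..}
      (\<lambda>t x. component (Y t) x True + 1 + c1 x) (\<lambda>t x. component (Y t) x False + c2 x)"
    using flow_solution[OF Y(2,3) flow_small] by blast
  then show ?thesis using Y(1) by (intro exI[of _ "\<lambda>t x. component (Y t) x True + 1 + c1 x"]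
      exI[of _ "\<lambda>t x. component (Y t) x False + c2 x"]) (auto simp: c1_def c2_def)
qed

lemma locally_attractive:
  "\<exists>\<eta>>0. \<forall>u0 v0. inX \<Omega> u0 \<and> inX \<Omega> v0 \<and> dist10 \<Omega> u0 v0 < ereal \<eta> \<longrightarrow>
    (\<exists>U V. is_sol \<Omega> d1 d2 f \<kappa> \<gamma>1 \<gamma>2 {0..} U V \<and> U 0 = u0 \<and> V 0 = v0) \<and>
    (\<forall>U V. is_sol \<Omega> d1 d2 f \<kappa> \<gamma>1 \<gamma>2 {0..} U V \<and> U 0 = u0 \<and> V 0 = v0 \<longrightarrow>
      ((\<lambda>t. dist10 \<Omega> (U t) (V t)) \<longlongrightarrow> 0) at_top)"
proof (intro exI[of _ "attraction_radius / 2"] conjI allI impI)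
  fix u0 v0 assume "inX \<Omega> u0 \<and> inX \<Omega> v0 \<and> dist10 \<Omega> u0 v0 < ereal (attraction_radius / 2)"
  moreover have "ereal (attraction_radius / 2) < ereal attraction_radius" using attraction_radius_pos by simp
  ultimately show "\<exists>U V. is_sol \<Omega> d1 d2 f \<kappa> \<gamma>1 \<gamma>2 {0..} U V \<and> U 0 = u0 \<and> V 0 = v0"
    "\<And>U V. is_sol \<Omega> d1 d2 f \<kappa> \<gamma>1 \<gamma>2 {0..} U V \<and> U 0 = u0 \<and> V 0 = v0 \<Longrightarrow>
      ((\<lambda>t. dist10 \<Omega> (U t) (V t)) \<longlongrightarrow> 0) at_top"
    using small_data_global_solution small_solutions_converge by (blast dest: less_trans)+
qed (use attraction_radius_pos in simp)

end

theorem proposition3p1: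
  fixes \<Omega> :: "'a::euclidean_space set"
    and d1 d2 f \<kappa> \<gamma>inf :: real
    and \<gamma>1 \<gamma>2 :: "'a \<Rightarrow> 'a \<Rightarrow> real"
  assumes dom: "open \<Omega>" "connected \<Omega>" "bounded \<Omega>" "\<Omega> \<noteq> {}"
    and pos: "d1 > 0" "d2 > 0" "f > 0" "\<kappa> > 0"
    and ginf: "\<gamma>inf \<ge> 1"
    and gmeas: "\<And>\<gamma>. \<gamma> \<in> {\<gamma>1, \<gamma>2} \<Longrightarrow>
                  (\<lambda>p. \<gamma> (fst p) (snd p)) \<in> borel_measurable (lebesgue_on (\<Omega> \<times> \<Omega>))"
    and gnn: "\<And>\<gamma> x y. \<gamma> \<in> {\<gamma>1, \<gamma>2} \<Longrightarrow> x \<in> \<Omega> \<Longrightarrow> y \<in> \<Omega> \<Longrightarrow> \<gamma> x y \<ge> 0"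
    and gsym: "\<And>\<gamma> x. \<gamma> \<in> {\<gamma>1, \<gamma>2} \<Longrightarrow> x \<in> \<Omega> \<Longrightarrow>
                 (\<integral>\<^sup>+ y. ennreal (\<gamma> y x) \<partial>lebesgue_on \<Omega>) = (\<integral>\<^sup>+ y. ennreal (\<gamma> x y) \<partial>lebesgue_on \<Omega>)"
    and gbnd: "\<And>\<gamma> x. \<gamma> \<in> {\<gamma>1, \<gamma>2} \<Longrightarrow> x \<in> \<Omega> \<Longrightarrow>
                 (\<integral>\<^sup>+ y. ennreal (\<gamma> x y) \<partial>lebesgue_on \<Omega>) \<le> ennreal \<gamma>inf"
  shows
    \<comment> \<open>Lyapunov stability\<close>
    "(\<forall>\<epsilon>>0. \<exists>\<delta>>0. \<forall>J\<in>time_intervals. \<forall>U V.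
        is_sol \<Omega> d1 d2 f \<kappa> \<gamma>1 \<gamma>2 J U V \<and> dist10 \<Omega> (U 0) (V 0) < ereal \<delta>
        \<longrightarrow> (\<forall>t\<in>J. dist10 \<Omega> (U t) (V t) < ereal \<epsilon>))
     \<and>
     \<comment> \<open>local attractivity, with global existence of solutions\<close>
     (\<exists>\<eta>>0. \<forall>u0 v0. inX \<Omega> u0 \<and> inX \<Omega> v0 \<and> dist10 \<Omega> u0 v0 < ereal \<eta> \<longrightarrow>
        (\<exists>U V. is_sol \<Omega> d1 d2 f \<kappa> \<gamma>1 \<gamma>2 {0..} U V \<and> U 0 = u0 \<and> V 0 = v0) \<and>
        (\<forall>U V. is_sol \<Omega> d1 d2 f \<kappa> \<gamma>1 \<gamma>2 {0..} U V \<and> U 0 = u0 \<and> V 0 = v0 \<longrightarrow>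
           ((\<lambda>t. dist10 \<Omega> (U t) (V t)) \<longlongrightarrow> 0) at_top))"
proof -
  interpret gray_scott \<Omega> \<gamma>1 \<gamma>2 \<gamma>inf d1 d2 f \<kappa>
    by unfold_locales (use dom pos ginf gmeas gnn gbnd in auto)
  show ?thesis using lyapunov_stable locally_attractive by blast
qed

end
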